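(* For every $C_\pi$ process $P$, every channel $m$, every prefix $\pi$, and channels $k,l$ and variables $x,y$, we have $$(\nu k)\big((\nu l)\overline{k}\langle l\rangle.m(y).[y=l]\pi.0 \;|\; k(x).P\big)\;\sim\;(\nu k)\big((\nu l)\overline{k}\langle l\rangle.m(y).0 \;|\; k(x).P\big).$$
   Context: The Confidential $\pi$-calculus $C_\pi$. There are two disjoint countable sets: ${\cal V}$ of variables (ranged over by $x,y,z,\dots$) and ${\cal C}$ of channels (ranged over by $k,l,m,n,\dots$). Let ${\cal N}={\cal V}\cup{\cal C}$, ranged over by $a,b,c,\dots$. Prefixes: $\pi ::= \overline{a}\langle k\rangle \mid a(x) \mid [a=b]\pi$. Processes: $P ::= 0 \mid \pi.P \mid P\,|\,P \mid (\nu k)P \mid\, !P$. The object of an output is always a channel, and the bound object of an input is always a variable. In $(\nu k)P$ the channel $k$ is bound, and in $a(x).P$ the variable $x$ is bound, with scope $P$. The sets $\mathrm{fn}(P)$, $\mathrm{bn}(P)$ and $\mathrm{n}(P)$ are the free, bound and all names of $P$. The set $\mathrm{fo}(P)$ consists of the free channels of $P$ that occur as objects of output prefixes in $P$. Processes are identified up to $\alpha$-conversion. Actions: $\alpha ::= \overline{k}\langle l\rangle \mid k(l) \mid (\nu l)\overline{k}\langle l\rangle \mid \tau$, where $k,l$ are channels. We have $\mathrm{fn}(\overline{k}\langle l\rangle)=\mathrm{fn}(k(l))=\{k,l\}$, $\mathrm{fn}((\nu l)\overline{k}\langle l\rangle)=\{k\}$, $\mathrm{bn}((\nu l)\overline{k}\langle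 l\rangle)=\{l\}$, all other bound-name sets are empty, $\mathrm{fn}(\tau)=\emptyset$, and $\mathrm{n}(\alpha)=\mathrm{fn}(\alpha)\cup\mathrm{bn}(\alpha)$. The labelled transition relation $\xrightarrow{\alpha}$ is the least relation closed under the following rules: - (out) $\overline{k}\langle l\rangle.P \xrightarrow{\overline{k}\langle l\rangle} P$. - (in) $k(x).P \xrightarrow{k(l)} P\{l/x\}$ for every channel $l$. - (match) If $\pi.P\xrightarrow{\alpha}P'$, then $[a=a]\pi.P\xrightarrow{\alpha}P'$. - (res) If $P\xrightarrow{\alpha}P'$ and $k\notin \mathrm{n}(\alpha)$, then $(\nu k)P\xrightarrow{\alpha}(\nu k)P'$. - (open) If $P\xrightarrow{\overline{k}\langle l\rangle}Q$ and $k\neq l$, then $(\nu l)P\xrightarrow{(\nu l)\overline{k}\langle l\rangle}Q$. - (par-l) If $P\xrightarrow{\alpha}Q$ and $\mathrm{bn}(\alpha)\cap\mathrm{fn}(R)=\emptyset$, then $P|R\xrightarrow{\alpha}Q|R$. - (comm-l) If $P\xrightarrow{\overline{k}\langle l\rangle}P'$ and $Q\xrightarrow{k(l)}Q'$, then $P|Q\xrightarrow{\tau}P'|Q'$. - (close-l) If $P\xrightarrow{(\nu l)\overline{k}\langle l\rangle}P'$, $Q\xrightarrow{k(l)}Q'$ and $l\notin\mathrm{fn}(Q)$, then $P|Q\xrightarrow{\tau}(\nu l)(P'|Q')$. - The symmetric rules (par-r), (comm-r), (close-r). - (rep-act) If $P\xrightarrow{\alpha}P'$, then $!P\xrightarrow{\alpha}P'|!P$.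 - (rep-comm) If $P\xrightarrow{\overline{k}\langle l\rangle}P'$ and $P\xrightarrow{k(l)}P''$, then $!P\xrightarrow{\tau}(P'|P'')|!P$. - (rep-close) If $P\xrightarrow{(\nu l)\overline{k}\langle l\rangle}P'$, $P\xrightarrow{k(l)}P''$ and $l\notin\mathrm{fn}(P)$, then $!P\xrightarrow{\tau}(\nu l)(P'|P'')|!P$. Strong bisimilarity $\sim$ is the largest symmetric binary relation on processes such that whenever $P\sim Q$ and $P\xrightarrow{\alpha}P'$ with $\mathrm{bn}(\alpha)\cap\mathrm{fn}(Q)=\emptyset$, there exists $Q'$ with $Q\xrightarrow{\alpha}Q'$ and $P'\sim Q'$. *)

theory Defs
  imports Main
begin

section \<open>Syntax of the confidential pi-calculus\<close>

type_synonym var = nat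
type_synonym chan = nat

datatype nm = Var var | Ch chan

text \<open>Prefixes: output (object always a channel), input (bound object always
a variable), and matching.\<close>
datatype prefix = POut nm chan | PIn nm var | PMatch nm nm prefix

datatype proc = PNil | Pre prefix proc | Par proc proc | Res chan proc | Bang proc

fun pnames :: "prefix \<Rightarrow> nm set" where
  "pnames (POut a k) = {a, Ch k}"
| "pnames (PIn a x) = {a}"
| "pnames (PMatch a b p) = {a, b} \<union> pnames p"

fun pbinder :: "prefix \<Rightarrow> var option" where
  "pbinder (POut a k) = None"
| "pbinder (PIn a x) = Some x"
| "pbinder (PMatch a b p) = pbinder p"

fun fn :: "proc \<Rightarrow> nm set" where
  "fn PNil = {}"
| "fn (Pre p P) = pnames p \<union> (case pbinder p of None \<Rightarrow> fn P | Some x \<Rightarrow> fn P - {Var x})"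
| "fn (Par P Q) = fn P \<union> fn Q"
| "fn (Res k P) = fn P - {Ch k}"
| "fn (Bang P) = fn P"

fun bnc :: "proc \<Rightarrow> chan set" where
  "bnc PNil = {}"
| "bnc (Pre p P) = bnc P"
| "bnc (Par P Q) = bnc P \<union> bnc Q"
| "bnc (Res k P) = insert k (bnc P)"
| "bnc (Bang P) = bnc P"

definition swp :: "nat \<Rightarrow> nat \<Rightarrow> nat \<Rightarrow> nat" where
  "swp a b c = (if c = a then b else if c = b then a else c)"

fun swapc_nm :: "chan \<Rightarrow> chan \<Rightarrow> nm \<Rightarrow> nm" where
  "swapc_nm k l (Ch c) = Ch (swp k l c)"
| "swapc_nm k l (Var x) = Var x"

fun swapc_pre :: "chan \<Rightarrow> chan \<Rightarrow> prefix \<Rightarrow> prefix" where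
  "swapc_pre k l (POut a c) = POut (swapc_nm k l a) (swp k l c)"
| "swapc_pre k l (PIn a x) = PIn (swapc_nm k l a) x"
| "swapc_pre k l (PMatch a b p) = PMatch (swapc_nm k l a) (swapc_nm k l b) (swapc_pre k l p)"

fun swapc :: "chan \<Rightarrow> chan \<Rightarrow> proc \<Rightarrow> proc" where
  "swapc k l PNil = PNil"
| "swapc k l (Pre p P) = Pre (swapc_pre k l p) (swapc k l P)"
| "swapc k l (Par P Q) = Par (swapc k l P) (swapc k l Q)"
| "swapc k l (Res c P) = Res (swp k l c) (swapc k l P)"
| "swapc k l (Bang P) = Bang (swapc k l P)"

fun swapv_nm :: "var \<Rightarrow> var \<Rightarrow> nm \<Rightarrow> nm" where
  "swapv_nm x y (Var z) = Var (swp x y z)"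
| "swapv_nm x y (Ch c) = Ch c"

fun swapv_pre :: "var \<Rightarrow> var \<Rightarrow> prefix \<Rightarrow> prefix" where
  "swapv_pre x y (POut a c) = POut (swapv_nm x y a) c"
| "swapv_pre x y (PIn a z) = PIn (swapv_nm x y a) (swp x y z)"
| "swapv_pre x y (PMatch a b p) = PMatch (swapv_nm x y a) (swapv_nm x y b) (swapv_pre x y p)"

fun swapv :: "var \<Rightarrow> var \<Rightarrow> proc \<Rightarrow> proc" where
  "swapv x y PNil = PNil"
| "swapv x y (Pre p P) = Pre (swapv_pre x y p) (swapv x y P)"
| "swapv x y (Par P Q) = Par (swapv x y P) (swapv x y Q)"
| "swapv x y (Res c P) = Res c (swapv x y P)"
| "swapv x y (Bang P) = Bang (swapv x y P)"

fun rebind :: "var \<Rightarrow> prefix \<Rightarrow> prefix" where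
  "rebind y (POut a c) = POut a c"
| "rebind y (PIn a x) = PIn a y"
| "rebind y (PMatch a b p) = PMatch a b (rebind y p)"

text \<open>Substitution of a channel for the free occurrences of a variable.  It is
only used (in rule (in)) when the channel is not bound by a restriction in the
process, so that it is capture-avoiding there.\<close>
fun subst_nm :: "var \<Rightarrow> chan \<Rightarrow> nm \<Rightarrow> nm" where
  "subst_nm x l (Var z) = (if z = x then Ch l else Var z)"
| "subst_nm x l (Ch c) = Ch c"

fun subst_pre :: "var \<Rightarrow> chan \<Rightarrow> prefix \<Rightarrow> prefix" where
  "subst_pre x l (POut a c) = POut (subst_nm x l a) c"
| "subst_pre x l (PIn a z) = PIn (subst_nm x l a) z"
| "subst_pre x l (PMatch a b p) = PMatch (subst_nm x l a) (subst_nm x l b) (subst_pre x l p)"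

fun subst :: "var \<Rightarrow> chan \<Rightarrow> proc \<Rightarrow> proc" where
  "subst x l PNil = PNil"
| "subst x l (Pre p P) = Pre (subst_pre x l p) (if pbinder p = Some x then P else subst x l P)"
| "subst x l (Par P Q) = Par (subst x l P) (subst x l Q)"
| "subst x l (Res c P) = Res c (subst x l P)"
| "subst x l (Bang P) = Bang (subst x l P)"

inductive alpha :: "proc \<Rightarrow> proc \<Rightarrow> bool" where
  a_refl: "alpha P P"
| a_sym: "alpha P Q \<Longrightarrow> alpha Q P"
| a_trans: "alpha P Q \<Longrightarrow> alpha Q R \<Longrightarrow> alpha P R"
| a_res_rename: "Ch l \<notin> fn P \<Longrightarrow> alpha (Res k P) (Res l (swapc k l P))"
| a_in_rename: "pbinder p = Some x \<Longrightarrow> Var y \<notin> fn P \<Longrightarrow>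
     alpha (Pre p P) (Pre (rebind y p) (swapv x y P))"
| a_pre: "alpha P Q \<Longrightarrow> alpha (Pre p P) (Pre p Q)"
| a_par: "alpha P P' \<Longrightarrow> alpha Q Q' \<Longrightarrow> alpha (Par P Q) (Par P' Q')"
| a_res: "alpha P Q \<Longrightarrow> alpha (Res k P) (Res k Q)"
| a_bang: "alpha P Q \<Longrightarrow> alpha (Bang P) (Bang Q)"

datatype act = AOut chan chan | AIn chan chan | ABOut chan chan | ATau
  \<comment> \<open>\<open>ABOut k l\<close> is the bound output \<open>(\<nu>l) k<l>\<close>\<close>

fun afn :: "act \<Rightarrow> nm set" where
  "afn (AOut k l) = {Ch k, Ch l}"
| "afn (AIn k l) = {Ch k, Ch l}"
| "afn (ABOut k l) = {Ch k}"
| "afn ATau = {}"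

fun abn :: "act \<Rightarrow> nm set" where
  "abn (ABOut k l) = {Ch l}"
| "abn _ = {}"

definition an :: "act \<Rightarrow> nm set" where
  "an a = afn a \<union> abn a"

text \<open>The transition relation; processes are identified up to alpha-conversion,
which is captured by rule \<open>s_alpha\<close>.\<close>
inductive step :: "proc \<Rightarrow> act \<Rightarrow> proc \<Rightarrow> bool" where
  s_out: "step (Pre (POut (Ch k) l) P) (AOut k l) P"
| s_in: "l \<notin> bnc P \<Longrightarrow> step (Pre (PIn (Ch k) x) P) (AIn k l) (subst x l P)"
| s_match: "step (Pre p P) a P' \<Longrightarrow> step (Pre (PMatch c c p) P) a P'"
| s_res: "step P a P' \<Longrightarrow> Ch k \<notin> an a \<Longrightarrow> step (Res k P) a (Res k P')"
| s_open: "step P (AOut k l) Q \<Longrightarrow> k \<noteq> l \<Longrightarrow> step (Res l P) (ABOut k l) Q"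
| s_par_l: "step P a Q \<Longrightarrow> abn a \<inter> fn R = {} \<Longrightarrow> step (Par P R) a (Par Q R)"
| s_par_r: "step P a Q \<Longrightarrow> abn a \<inter> fn R = {} \<Longrightarrow> step (Par R P) a (Par R Q)"
| s_comm_l: "step P (AOut k l) P' \<Longrightarrow> step Q (AIn k l) Q' \<Longrightarrow> step (Par P Q) ATau (Par P' Q')"
| s_comm_r: "step P (AOut k l) P' \<Longrightarrow> step Q (AIn k l) Q' \<Longrightarrow> step (Par Q P) ATau (Par Q' P')"
| s_close_l: "step P (ABOut k l) P' \<Longrightarrow> step Q (AIn k l) Q' \<Longrightarrow> Ch l \<notin> fn Q \<Longrightarrow>
     step (Par P Q) ATau (Res l (Par P' Q'))"
| s_close_r: "step P (ABOut k l) P' \<Longrightarrow> step Q (AIn k l) Q' \<Longrightarrow> Ch l \<notin> fn Q \<Longrightarrow>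
     step (Par Q P) ATau (Res l (Par Q' P'))"
| s_rep_act: "step P a P' \<Longrightarrow> step (Bang P) a (Par P' (Bang P))"
| s_rep_comm: "step P (AOut k l) P' \<Longrightarrow> step P (AIn k l) P'' \<Longrightarrow>
     step (Bang P) ATau (Par (Par P' P'') (Bang P))"
| s_rep_close: "step P (ABOut k l) P' \<Longrightarrow> step P (AIn k l) P'' \<Longrightarrow> Ch l \<notin> fn P \<Longrightarrow>
     step (Bang P) ATau (Par (Res l (Par P' P'')) (Bang P))"
| s_alpha: "alpha P P' \<Longrightarrow> step P' a Q \<Longrightarrow> step P a Q"

definition is_bisim :: "(proc \<times> proc) set \<Rightarrow> bool" where
  "is_bisim R \<longleftrightarrow> sym R \<and>
     (\<forall>P Q. (P, Q) \<in> R \<longrightarrow> (\<forall>a P'. step P a P' \<and> abn a \<inter> fn Q = {} \<longrightarrow>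
        (\<exists>Q'. step Q a Q' \<and> (P', Q') \<in> R)))"

definition bisimilar :: "proc \<Rightarrow> proc \<Rightarrow> bool" (infix "\<sim>\<^sub>s" 50) where
  "P \<sim>\<^sub>s Q \<longleftrightarrow> (\<exists>R. is_bisim R \<and> (P, Q) \<in> R)"

end

theory Submission
  imports Defs
begin

text \<open>After the handshake on \<open>k\<close>, the channel \<open>l\<close> is private to the receiver \<open>m(y)\<close> and to
  \<open>P{l/x}\<close>.  Since only channels, never variables, are output, no process can ever send \<open>l\<close>, so the
  match \<open>[y=l]\<close> can never fire.  The two sides are related by pruning such dead matches relative to a
  set of protected channels (bound, and never an output object of the pruned process); each side
  simulates the other up to alpha-conversion, by rule induction on transitions.  The handshake itself,
  during which \<open>l\<close> is still sent once, is handled separately.\<close>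

lemma swp_simps[simp]:
  "swp a b (swp a b c) = c" "swp a b a = b" "swp a b b = a" "swp a a c = c"
  "(swp a b c = swp a b d) = (c = d)"
  by (auto simp: swp_def)

lemma swp_other[simp]: "c \<noteq> a \<Longrightarrow> c \<noteq> b \<Longrightarrow> swp a b c = c"
  by (auto simp: swp_def)

lemma swp_commute: "swp a b (swp c d e) = swp (swp a b c) (swp a b d) (swp a b e)"
  by (auto simp: swp_def)

lemma swp_sym: "swp a b = swp b a"
  by (auto simp: swp_def fun_eq_iff)

lemma mem_image_involution: "(\<And>x. f (f x) = x) \<Longrightarrow> (y \<in> f ` S) = (f y \<in> S)"
  by (metis image_iff)

lemma mem_swp_image[simp]: "(x \<in> swp u v ` A) = (swp u v x \<in> A)"
  by (simp add: mem_image_involution)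

lemma swapc_nm_inv[simp]: "swapc_nm a b (swapc_nm a b n) = n"
  by (cases n) auto
lemma swapc_pre_inv[simp]: "swapc_pre a b (swapc_pre a b p) = p"
  by (induction p) auto
lemma swapc_inv[simp]: "swapc a b (swapc a b P) = P"
  by (induction P) auto

lemma swapc_nm_id[simp]: "swapc_nm a a n = n"
  by (cases n) auto
lemma swapc_pre_id[simp]: "swapc_pre a a p = p"
  by (induction p) auto
lemma swapc_id[simp]: "swapc a a P = P"
  by (induction P) auto

lemma swapc_nm_sym: "swapc_nm a b n = swapc_nm b a n"
  by (cases n) (auto simp: swp_def)
lemma swapc_pre_sym: "swapc_pre a b p = swapc_pre b a p"
  by (induction p) (auto simp: swapc_nm_sym swp_sym)
lemma swapc_sym: "swapc a b P = swapc b a P"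
  by (induction P) (auto simp: swapc_pre_sym swp_sym)

lemma swapc_nm_inj[simp]: "(swapc_nm a b n = swapc_nm a b n') = (n = n')"
  by (metis swapc_nm_inv)

lemma swapc_nm_commute:
  "swapc_nm a b (swapc_nm c d n) = swapc_nm (swp a b c) (swp a b d) (swapc_nm a b n)"
  by (cases n) (simp_all add: swp_commute[of a b c d])
lemma swapc_pre_commute:
  "swapc_pre a b (swapc_pre c d p) = swapc_pre (swp a b c) (swp a b d) (swapc_pre a b p)"
  by (induction p) (simp_all add: swp_commute[of a b c d] swapc_nm_commute[of a b c d])
lemma swapc_commute:
  "swapc a b (swapc c d P) = swapc (swp a b c) (swp a b d) (swapc a b P)"
  by (induction P) (simp_all add: swp_commute[of a b c d] swapc_pre_commute[of a b c d])

lemma pbinder_swapc[simp]: "pbinder (swapc_pre a b p) = pbinder p"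
  by (induction p) auto

lemma pnames_swapc: "pnames (swapc_pre a b p) = swapc_nm a b ` pnames p"
  by (induction p) auto

lemma fn_swapc: "fn (swapc a b P) = swapc_nm a b ` fn P"
proof (induction P)
  case (Pre p P)
  show ?case
  proof (cases "pbinder p")
    case None thus ?thesis using Pre by (auto simp: pnames_swapc image_Un)
  next
    case (Some x)
    have "swapc_nm a b ` (fn P - {Var x}) = swapc_nm a b ` fn P - {Var x}"
      by (subst image_set_diff) (auto simp: inj_on_def)
    thus ?thesis using Pre Some by (auto simp: pnames_swapc)
  qed
next
  case (Res c P)
  have "swapc_nm a b ` (fn P - {Ch c}) = swapc_nm a b ` fn P - {Ch (swp a b c)}"
    by (subst image_set_diff) (auto simp: inj_on_def)
  thus ?case using Res by auto
qed (auto simp: image_Un)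

lemma mem_fn_swapc: "(n \<in> fn (swapc a b P)) = (swapc_nm a b n \<in> fn P)"
  by (simp add: fn_swapc mem_image_involution)
lemma Ch_fn_swapc: "(Ch c \<in> fn (swapc a b P)) = (Ch (swp a b c) \<in> fn P)"
  by (simp add: mem_fn_swapc)
lemma Var_fn_swapc[simp]: "(Var x \<in> fn (swapc a b P)) = (Var x \<in> fn P)"
  by (simp add: mem_fn_swapc)

lemma bnc_swapc: "bnc (swapc a b P) = swp a b ` bnc P"
  by (induction P) auto

lemma subst_nm_swapc: "swapc_nm a b (subst_nm x l n) = subst_nm x (swp a b l) (swapc_nm a b n)"
  by (cases n) auto
lemma subst_pre_swapc:
  "swapc_pre a b (subst_pre x l p) = subst_pre x (swp a b l) (swapc_pre a b p)"
  by (induction p) (auto simp: subst_nm_swapc)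
lemma subst_swapc: "swapc a b (subst x l P) = subst x (swp a b l) (swapc a b P)"
  by (induction P) (auto simp: subst_pre_swapc)

lemma swapv_nm_inv[simp]: "swapv_nm x y (swapv_nm x y n) = n"
  by (cases n) auto
lemma swapv_pre_inv[simp]: "swapv_pre x y (swapv_pre x y p) = p"
  by (induction p) auto
lemma swapv_inv[simp]: "swapv x y (swapv x y P) = P"
  by (induction P) auto

lemma swapv_nm_inj[simp]: "(swapv_nm x y n = swapv_nm x y n') = (n = n')"
  by (metis swapv_nm_inv)

lemma swapc_swapv_nm: "swapc_nm a b (swapv_nm x y n) = swapv_nm x y (swapc_nm a b n)"
  by (cases n) auto
lemma swapc_swapv_pre: "swapc_pre a b (swapv_pre x y p) = swapv_pre x y (swapc_pre a b p)"
  by (induction p) (auto simp: swapc_swapv_nm)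
lemma swapc_swapv: "swapc a b (swapv x y P) = swapv x y (swapc a b P)"
  by (induction P) (auto simp: swapc_swapv_pre)

lemma swapc_rebind: "swapc_pre a b (rebind y p) = rebind y (swapc_pre a b p)"
  by (induction p) auto

lemma pbinder_swapv: "pbinder (swapv_pre x y p) = map_option (swp x y) (pbinder p)"
  by (induction p) auto

lemma pnames_swapv: "pnames (swapv_pre x y p) = swapv_nm x y ` pnames p"
  by (induction p) auto

lemma fn_swapv: "fn (swapv x y P) = swapv_nm x y ` fn P"
proof (induction P)
  case (Pre p P)
  show ?case
  proof (cases "pbinder p")
    case None thus ?thesis using Pre by (auto simp: pnames_swapv image_Un pbinder_swapv)
  next
    case (Some z)
    have "swapv_nm x y ` (fn P - {Var z}) = swapv_nm x y ` fn P - {Var (swp x y z)}"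
      by (subst image_set_diff) (auto simp: inj_on_def)
    thus ?thesis using Pre Some by (auto simp: pnames_swapv pbinder_swapv)
  qed
next
  case (Res c P)
  have "swapv_nm x y ` (fn P - {Ch c}) = swapv_nm x y ` fn P - {Ch c}"
    by (subst image_set_diff) (auto simp: inj_on_def)
  thus ?case using Res by auto
qed (auto simp: image_Un)

lemma mem_fn_swapv: "(n \<in> fn (swapv x y P)) = (swapv_nm x y n \<in> fn P)"
  by (simp add: fn_swapv mem_image_involution)

lemma pnames_rebind[simp]: "pnames (rebind y p) = pnames p"
  by (induction p) auto
lemma pbinder_rebind: "pbinder p = Some x \<Longrightarrow> pbinder (rebind y p) = Some y"
  by (induction p) auto
lemma rebind_rebind[simp]: "rebind z (rebind y p) = rebind z p"
  by (induction p) auto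


definition fchans :: "proc \<Rightarrow> chan set" where
  "fchans P = {c. Ch c \<in> fn P}"

lemma mem_fchans[simp]: "c \<in> fchans P \<longleftrightarrow> Ch c \<in> fn P"
  by (simp add: fchans_def)

lemma finite_pnames: "finite (pnames p)"
  by (induction p) auto

lemma finite_fn: "finite (fn P)"
  by (induction P) (auto simp: finite_pnames split: option.splits)

lemma finite_fchans: "finite (fchans P)"
proof -
  have "fchans P \<subseteq> (\<lambda>n. case n of Ch c \<Rightarrow> c | Var x \<Rightarrow> 0) ` fn P"
    by (force simp: image_iff fchans_def)
  thus ?thesis using finite_fn finite_surj by blast
qed

lemma fresh_chanE:
  assumes "\<And>d. d \<notin> F \<Longrightarrow> thesis" "finite (F :: chan set)"
  shows thesis
  using ex_new_if_finite[OF infinite_UNIV_nat assms(2)] assms(1) by blast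

lemma swapc_nm_fresh: "n \<noteq> Ch a \<Longrightarrow> n \<noteq> Ch b \<Longrightarrow> swapc_nm a b n = n"
  by (cases n) auto
lemma swapc_pre_fresh: "Ch a \<notin> pnames p \<Longrightarrow> Ch b \<notin> pnames p \<Longrightarrow> swapc_pre a b p = p"
  by (induction p) (auto simp: swapc_nm_fresh)


section \<open>Alpha-equivalence\<close>

declare alpha.a_trans[trans]

lemma alpha_fn: "alpha P Q \<Longrightarrow> fn P = fn Q"
proof (induction rule: alpha.induct)
  case (a_res_rename l P k)
  show ?case
  proof (rule set_eqI)
    fix n show "n \<in> fn (Res k P) \<longleftrightarrow> n \<in> fn (Res l (swapc k l P))"
      using a_res_rename by (cases n) (auto simp: mem_fn_swapc swp_def split: if_splits)
  qed
next
  case (a_in_rename p x y P)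
  have "fn (swapv x y P) - {Var y} = fn P - {Var x}"
  proof (rule set_eqI)
    fix n show "n \<in> fn (swapv x y P) - {Var y} \<longleftrightarrow> n \<in> fn P - {Var x}"
      using a_in_rename by (cases n) (auto simp: mem_fn_swapv swp_def split: if_splits)
  qed
  thus ?case using a_in_rename by (simp add: pbinder_rebind)
next
  case (a_pre P Q p) thus ?case by (auto split: option.splits)
qed simp_all

lemma alpha_swapc: "alpha P Q \<Longrightarrow> alpha (swapc a b P) (swapc a b Q)"
proof (induction rule: alpha.induct)
  case (a_res_rename l P k)
  have "alpha (Res (swp a b k) (swapc a b P))
          (Res (swp a b l) (swapc (swp a b k) (swp a b l) (swapc a b P)))"
    by (rule alpha.a_res_rename) (use a_res_rename in \<open>simp add: Ch_fn_swapc\<close>)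
  thus ?case by (simp add: swapc_commute[of a b k l])
next
  case (a_in_rename p x y P)
  have "alpha (Pre (swapc_pre a b p) (swapc a b P))
          (Pre (rebind y (swapc_pre a b p)) (swapv x y (swapc a b P)))"
    by (rule alpha.a_in_rename) (use a_in_rename in auto)
  thus ?case by (simp add: swapc_rebind swapc_swapv)
next
  case (a_sym P Q) thus ?case by (metis alpha.a_sym)
next
  case (a_trans P Q R) thus ?case by (metis alpha.a_trans)
qed (simp_all add: alpha.a_refl alpha.a_pre alpha.a_par alpha.a_res alpha.a_bang)

lemma alpha_fresh_swapc: "Ch a \<notin> fn P \<Longrightarrow> Ch b \<notin> fn P \<Longrightarrow> alpha P (swapc a b P)"
proof (induction P)
  case PNil thus ?case by (simp add: alpha.a_refl)
next
  case (Pre p P)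
  have "Ch a \<notin> fn P" "Ch b \<notin> fn P" using Pre.prems by (auto split: option.splits)
  moreover have "swapc_pre a b p = p" using Pre.prems by (intro swapc_pre_fresh) auto
  ultimately show ?case using Pre.IH by (simp add: alpha.a_pre)
next
  case (Par P Q) thus ?case by (simp add: alpha.a_par)
next
  case (Bang P) thus ?case by (simp add: alpha.a_bang)
next
  case (Res c P)
  consider "a = b" | "a \<noteq> b" "c = a" | "a \<noteq> b" "c = b" | "c \<noteq> a" "c \<noteq> b" by blast
  thus ?case
  proof cases
    case 1 thus ?thesis by (simp add: alpha.a_refl)
  next
    case 2 thus ?thesis using Res.prems by (auto intro: alpha.a_res_rename)
  next
    case 3
    hence "alpha (Res b P) (Res a (swapc b a P))" using Res.prems by (intro alpha.a_res_rename) auto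
    thus ?thesis using 3 by (simp add: swapc_sym[of b a])
  next
    case 4 thus ?thesis using Res by (simp add: alpha.a_res)
  qed
qed

text \<open>The statements below are closed under symmetry, so that they can be proved by induction over
  \<open>alpha\<close>.\<close>

lemma alpha_Par_cases:
  "alpha X Y \<Longrightarrow>
    (\<forall>P Q. X = Par P Q \<longrightarrow> (\<exists>P' Q'. Y = Par P' Q' \<and> alpha P P' \<and> alpha Q Q')) \<and>
    (\<forall>P Q. Y = Par P Q \<longrightarrow> (\<exists>P' Q'. X = Par P' Q' \<and> alpha P P' \<and> alpha Q Q'))"
proof (induction rule: alpha.induct)
  case (a_trans X Y Z)
  show ?case
  proof (intro conjI allI impI)
    fix P Q assume "X = Par P Q"
    with a_trans.IH(1) obtain P1 Q1 where "Y = Par P1 Q1" "alpha P P1" "alpha Q Q1" by blast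
    with a_trans.IH(2) show "\<exists>P' Q'. Z = Par P' Q' \<and> alpha P P' \<and> alpha Q Q'"
      by (blast intro: alpha.a_trans)
  next
    fix P Q assume "Z = Par P Q"
    with a_trans.IH(2) obtain P1 Q1 where "Y = Par P1 Q1" "alpha P P1" "alpha Q Q1" by blast
    with a_trans.IH(1) show "\<exists>P' Q'. X = Par P' Q' \<and> alpha P P' \<and> alpha Q Q'"
      by (blast intro: alpha.a_trans)
  qed
next
  case (a_par P P' Q Q') thus ?case by (blast intro: alpha.a_sym)
next
  case (a_sym P Q) thus ?case by blast
qed (auto intro: alpha.a_refl)

lemma alpha_ParE:
  "alpha (Par P Q) Y \<Longrightarrow> (\<And>P' Q'. Y = Par P' Q' \<Longrightarrow> alpha P P' \<Longrightarrow> alpha Q Q' \<Longrightarrow> R) \<Longrightarrow> R"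
  using alpha_Par_cases by blast
lemma alpha_ParE2:
  "alpha Y (Par P Q) \<Longrightarrow> (\<And>P' Q'. Y = Par P' Q' \<Longrightarrow> alpha P' P \<Longrightarrow> alpha Q' Q \<Longrightarrow> R) \<Longrightarrow> R"
  using alpha_Par_cases[of Y "Par P Q"] by (blast dest: alpha.a_sym)
lemma alpha_Par_iff: "alpha (Par P Q) (Par P' Q') = (alpha P P' \<and> alpha Q Q')"
  by (auto elim: alpha_ParE intro: alpha.a_par)

lemma alpha_Bang_cases:
  "alpha X Y \<Longrightarrow> (\<forall>P. X = Bang P \<longrightarrow> (\<exists>P'. Y = Bang P')) \<and> (\<forall>P. Y = Bang P \<longrightarrow> (\<exists>P'. X = Bang P'))"
  by (induction rule: alpha.induct) auto

lemma alpha_BangE2: "alpha Y (Bang P) \<Longrightarrow> (\<And>P'. Y = Bang P' \<Longrightarrow> R) \<Longrightarrow> R"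
  using alpha_Bang_cases by blast

lemma alpha_PNil_iff: "alpha X Y \<Longrightarrow> (X = PNil) = (Y = PNil)"
  by (induction rule: alpha.induct) auto

lemma alpha_Pre_cases:
  "alpha X Y \<Longrightarrow>
    (\<forall>p P. X = Pre p P \<longrightarrow> (\<exists>p' P'. Y = Pre p' P' \<and> rebind 0 p' = rebind 0 p)) \<and>
    (\<forall>p P. Y = Pre p P \<longrightarrow> (\<exists>p' P'. X = Pre p' P' \<and> rebind 0 p' = rebind 0 p))"
proof (induction rule: alpha.induct)
  case (a_trans X Y Z)
  show ?case
  proof (intro conjI allI impI)
    fix p P assume "X = Pre p P"
    with a_trans.IH(1) obtain p1 P1 where "Y = Pre p1 P1" "rebind 0 p1 = rebind 0 p" by blast
    with a_trans.IH(2) show "\<exists>p' P'. Z = Pre p' P' \<and> rebind 0 p' = rebind 0 p" by auto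
  next
    fix p P assume "Z = Pre p P"
    with a_trans.IH(2) obtain p1 P1 where "Y = Pre p1 P1" "rebind 0 p1 = rebind 0 p" by blast
    with a_trans.IH(1) show "\<exists>p' P'. X = Pre p' P' \<and> rebind 0 p' = rebind 0 p" by auto
  qed
next
  case (a_sym P Q) thus ?case by blast
qed auto

lemma alpha_PreE:
  "alpha (Pre p P) Y \<Longrightarrow> (\<And>p' P'. Y = Pre p' P' \<Longrightarrow> rebind 0 p' = rebind 0 p \<Longrightarrow> R) \<Longrightarrow> R"
  using alpha_Pre_cases by blast
lemma alpha_PreE2:
  "alpha Y (Pre p P) \<Longrightarrow> (\<And>p' P'. Y = Pre p' P' \<Longrightarrow> rebind 0 p' = rebind 0 p \<Longrightarrow> R) \<Longrightarrow> R"
  using alpha_Pre_cases by blast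

lemma alpha_Pre_nobind_cases:
  "alpha X Y \<Longrightarrow>
    (\<forall>p P. X = Pre p P \<longrightarrow> pbinder p = None \<longrightarrow> (\<exists>P'. Y = Pre p P' \<and> alpha P P')) \<and>
    (\<forall>p P. Y = Pre p P \<longrightarrow> pbinder p = None \<longrightarrow> (\<exists>P'. X = Pre p P' \<and> alpha P P'))"
proof (induction rule: alpha.induct)
  case (a_trans X Y Z)
  show ?case
  proof (intro conjI allI impI)
    fix p P assume "X = Pre p P" "pbinder p = None"
    with a_trans.IH(1) obtain P1 where "Y = Pre p P1" "alpha P P1" by blast
    with a_trans.IH(2) \<open>pbinder p = None\<close> show "\<exists>P'. Z = Pre p P' \<and> alpha P P'"
      by (blast intro: alpha.a_trans)
  next
    fix p P assume "Z = Pre p P" "pbinder p = None"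
    with a_trans.IH(2) obtain P1 where "Y = Pre p P1" "alpha P P1" by blast
    with a_trans.IH(1) \<open>pbinder p = None\<close> show "\<exists>P'. X = Pre p P' \<and> alpha P P'"
      by (blast intro: alpha.a_trans)
  qed
next
  case (a_in_rename p x y P) thus ?case using pbinder_rebind[OF a_in_rename(1), of y] by simp
next
  case (a_pre P Q p) thus ?case by (blast intro: alpha.a_sym)
next
  case (a_sym P Q) thus ?case by blast
qed (auto intro: alpha.a_refl)

lemma alpha_Pre_nobindE:
  "alpha (Pre p P) Y \<Longrightarrow> pbinder p = None \<Longrightarrow> (\<And>P'. Y = Pre p P' \<Longrightarrow> alpha P P' \<Longrightarrow> R) \<Longrightarrow> R"
  using alpha_Pre_nobind_cases by blast
lemma alpha_Pre_nobind_iff: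
  "pbinder p = None \<Longrightarrow> alpha (Pre p P) (Pre p' P') = (p' = p \<and> alpha P P')"
  by (auto elim: alpha_Pre_nobindE intro: alpha.a_pre)

text \<open>For restrictions the binders may differ, so the bodies are compared after swapping both binders
  with all but finitely many channels \<open>d\<close>.\<close>

definition res_alpha :: "chan \<Rightarrow> proc \<Rightarrow> chan \<Rightarrow> proc \<Rightarrow> bool" where
  "res_alpha c P c' P' \<longleftrightarrow> (\<exists>F. finite F \<and> (\<forall>d. d \<notin> F \<longrightarrow> alpha (swapc c d P) (swapc c' d P')))"

lemma res_alpha_trans: "res_alpha c P c' P' \<Longrightarrow> res_alpha c' P' c'' P'' \<Longrightarrow> res_alpha c P c'' P''"
  unfolding res_alpha_def
proof (elim exE conjE)
  fix F G assume "finite F" "\<forall>d. d \<notin> F \<longrightarrow> alpha (swapc c d P) (swapc c' d P')"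
    "finite G" "\<forall>d. d \<notin> G \<longrightarrow> alpha (swapc c' d P') (swapc c'' d P'')"
  thus "\<exists>F. finite F \<and> (\<forall>d. d \<notin> F \<longrightarrow> alpha (swapc c d P) (swapc c'' d P''))"
    by (intro exI[of _ "F \<union> G"]) (auto intro: alpha.a_trans)
qed

lemma res_alpha_sym: "res_alpha c P c' P' \<Longrightarrow> res_alpha c' P' c P"
  unfolding res_alpha_def using alpha.a_sym by blast

lemma res_alpha_rename: "Ch l \<notin> fn P \<Longrightarrow> res_alpha k P l (swapc k l P)"
proof (cases "k = l")
  case True thus ?thesis unfolding res_alpha_def by (auto intro: alpha.a_refl)
next
  case False
  assume l: "Ch l \<notin> fn P"
  show ?thesis unfolding res_alpha_def
  proof (intro exI[of _ "{k, l} \<union> fchans P"] conjI allI impI)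
    show "finite ({k, l} \<union> fchans P)" using finite_fchans by auto
  next
    fix d assume d: "d \<notin> {k, l} \<union> fchans P"
    have "alpha P (swapc l d P)" using l d by (intro alpha_fresh_swapc) auto
    hence "alpha (swapc k d P) (swapc k d (swapc l d P))" by (rule alpha_swapc)
    moreover have "swapc l d (swapc k l P) = swapc k d (swapc l d P)"
      using d False by (simp add: swapc_commute[of l d k l])
    ultimately show "alpha (swapc k d P) (swapc l d (swapc k l P))" by simp
  qed
qed

lemma alpha_Res_cases:
  "alpha X Y \<Longrightarrow>
    (\<forall>c P. X = Res c P \<longrightarrow> (\<exists>c' P'. Y = Res c' P' \<and> res_alpha c P c' P')) \<and>
    (\<forall>c P. Y = Res c P \<longrightarrow> (\<exists>c' P'. X = Res c' P' \<and> res_alpha c P c' P'))"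
proof (induction rule: alpha.induct)
  case (a_refl P) thus ?case unfolding res_alpha_def by (auto intro: alpha.a_refl)
next
  case (a_trans X Y Z)
  show ?case
  proof (intro conjI allI impI)
    fix c P assume "X = Res c P"
    with a_trans.IH(1) obtain c1 P1 where "Y = Res c1 P1" "res_alpha c P c1 P1" by blast
    with a_trans.IH(2) show "\<exists>c' P'. Z = Res c' P' \<and> res_alpha c P c' P'"
      by (blast intro: res_alpha_trans)
  next
    fix c P assume "Z = Res c P"
    with a_trans.IH(2) obtain c1 P1 where "Y = Res c1 P1" "res_alpha c P c1 P1" by blast
    with a_trans.IH(1) show "\<exists>c' P'. X = Res c' P' \<and> res_alpha c P c' P'"
      by (blast intro: res_alpha_trans)
  qed
next
  case (a_sym P Q) thus ?case by blast
next
  case (a_res_rename l P k)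
  thus ?case using res_alpha_rename res_alpha_sym by auto
next
  case (a_res P Q k)
  thus ?case unfolding res_alpha_def by (auto intro: alpha_swapc alpha.a_sym)
qed simp_all

lemma alpha_ResE2: "alpha Y (Res c P) \<Longrightarrow> (\<And>c' P'. Y = Res c' P' \<Longrightarrow> R) \<Longrightarrow> R"
  using alpha_Res_cases by blast

lemma alpha_Res_iff:
  "alpha (Res c P) (Res c' P') = ((c' = c \<or> Ch c' \<notin> fn P) \<and> alpha (swapc c c' P) P')"
proof
  assume a: "alpha (Res c P) (Res c' P')"
  have fr: "c' = c \<or> Ch c' \<notin> fn P"
    using alpha_fn[OF a] by auto
  from a have "res_alpha c P c' P'" using alpha_Res_cases by blast
  then obtain F where F: "finite F" "\<forall>d. d \<notin> F \<longrightarrow> alpha (swapc c d P) (swapc c' d P')"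
    unfolding res_alpha_def by blast
  obtain d where d: "d \<notin> F \<union> {c, c'} \<union> fchans P \<union> fchans P'"
    by (erule fresh_chanE) (simp add: F(1) finite_fchans)
  have "alpha (swapc c' d (swapc c d P)) P'"
    using alpha_swapc[OF F(2)[rule_format, of d], of c' d] d by simp
  moreover have "alpha (swapc c c' P) (swapc c' d (swapc c d P))" if "c' \<noteq> c"
  proof -
    have "alpha P (swapc c' d P)" using fr that d by (intro alpha_fresh_swapc) auto
    hence "alpha (swapc c c' P) (swapc c c' (swapc c' d P))" by (rule alpha_swapc)
    thus ?thesis using d that by (simp add: swapc_commute[of c' d c d])
  qed
  ultimately show "(c' = c \<or> Ch c' \<notin> fn P) \<and> alpha (swapc c c' P) P'"
    using fr by (cases "c' = c") (auto intro: alpha.a_trans)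
next
  assume "(c' = c \<or> Ch c' \<notin> fn P) \<and> alpha (swapc c c' P) P'"
  thus "alpha (Res c P) (Res c' P')"
    by (metis alpha.a_res alpha.a_res_rename alpha.a_trans swapc_id)
qed

lemma alpha_Res_fresh_rename: "Ch d \<notin> fn Z \<Longrightarrow> alpha (Res c Z) (Res d (swapc c d Z))"
  by (cases "d = c") (auto intro: alpha.a_refl alpha.a_res_rename)


text \<open>Since variables are
  never output, a transition can only output channels in \<open>fo\<close>, and \<open>fo\<close> grows only by received
  channels.\<close>

fun pfo :: "prefix \<Rightarrow> chan set" where
  "pfo (POut a c) = {c}"
| "pfo (PIn a x) = {}"
| "pfo (PMatch a b p) = pfo p"

fun fo :: "proc \<Rightarrow> chan set" where
  "fo PNil = {}"
| "fo (Pre p P) = pfo p \<union> fo P"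
| "fo (Par P Q) = fo P \<union> fo Q"
| "fo (Res c P) = fo P - {c}"
| "fo (Bang P) = fo P"

fun aobj :: "act \<Rightarrow> chan set" where
  "aobj (AOut k n) = {n}"
| "aobj (AIn k n) = {n}"
| "aobj (ABOut k n) = {n}"
| "aobj ATau = {}"

lemma an_simps[simp]: "an (AOut k l) = {Ch k, Ch l}" "an (AIn k l) = {Ch k, Ch l}"
  "an (ABOut k l) = {Ch k, Ch l}" "an ATau = {}"
  by (auto simp: an_def)

lemma finite_aobj: "finite (aobj a)"
  by (cases a) auto

lemma finite_an_chans: "finite {e. Ch e \<in> an a}"
  by (cases a) auto

lemma aobj_an: "l \<in> aobj a \<Longrightarrow> Ch l \<in> an a"
  by (cases a) auto

lemma pfo_pnames: "c \<in> pfo p \<Longrightarrow> Ch c \<in> pnames p"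
  by (induction p) auto
lemma fo_fn: "c \<in> fo P \<Longrightarrow> Ch c \<in> fn P"
  by (induction P) (auto simp: pfo_pnames split: option.splits)

lemma pfo_swapc: "pfo (swapc_pre a b p) = swp a b ` pfo p"
  by (induction p) auto
lemma fo_swapc: "fo (swapc a b P) = swp a b ` fo P"
proof (induction P)
  case (Res c P)
  have "swp a b ` (fo P - {c}) = swp a b ` fo P - {swp a b c}"
    by (subst image_set_diff) (auto simp: inj_on_def)
  thus ?case using Res by simp
qed (auto simp: pfo_swapc image_Un)

lemma mem_fo_swapc: "(c \<in> fo (swapc a b P)) = (swp a b c \<in> fo P)"
  by (simp add: fo_swapc mem_image_involution)

lemma pfo_swapv[simp]: "pfo (swapv_pre x y p) = pfo p"
  by (induction p) auto
lemma fo_swapv[simp]: "fo (swapv x y P) = fo P"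
  by (induction P) auto
lemma pfo_rebind[simp]: "pfo (rebind y p) = pfo p"
  by (induction p) auto
lemma pfo_subst[simp]: "pfo (subst_pre x l p) = pfo p"
  by (induction p) auto
lemma fo_subst[simp]: "fo (subst x l P) = fo P"
  by (induction P) auto

lemma alpha_fo: "alpha P Q \<Longrightarrow> fo P = fo Q"
proof (induction rule: alpha.induct)
  case (a_res_rename l P k)
  hence "l \<notin> fo P" using fo_fn by blast
  show ?case
  proof (rule set_eqI)
    fix c show "c \<in> fo (Res k P) \<longleftrightarrow> c \<in> fo (Res l (swapc k l P))"
      using \<open>l \<notin> fo P\<close> by (auto simp: mem_fo_swapc swp_def)
  qed
qed auto

lemma pbinder_subst[simp]: "pbinder (subst_pre x l p) = pbinder p"
  by (induction p) auto

lemma pnames_subst: "pnames (subst_pre x l p) \<subseteq> (pnames p - {Var x}) \<union> {Ch l}"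
proof (induction p)
  case (POut a c) thus ?case by (cases a) auto
next
  case (PIn a z) thus ?case by (cases a) auto
next
  case (PMatch a b p) thus ?case by (cases a; cases b) auto
qed

lemma fn_subst: "fn (subst x l P) \<subseteq> (fn P - {Var x}) \<union> {Ch l}"
proof (induction P)
  case (Pre p P)
  thus ?case using pnames_subst[of x l p] by (auto split: option.splits)
qed auto

lemma bnc_subst[simp]: "bnc (subst x l P) = bnc P"
  by (induction P) auto


lemma step_out_fo: "step X (AOut k n) X' \<Longrightarrow> n \<in> fo X"
proof (induction X "AOut k n" X' arbitrary: k rule: step.induct)
  case (s_alpha P P' Q) thus ?case using alpha_fo by blast
qed auto

lemma step_fo: "step X a X' \<Longrightarrow> fo X' \<subseteq> fo X \<union> aobj a"
proof (induction rule: step.induct)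
  case (s_alpha P P' a Q) thus ?case using alpha_fo by blast
qed (use step_out_fo in fastforce)+

lemma step_fn: "step X a X' \<Longrightarrow> fn X' \<subseteq> fn X \<union> Ch ` aobj a"
proof (induction rule: step.induct)
  case (s_in l P k x) thus ?case using fn_subst[of x l P] by auto
next
  case (s_alpha P P' a Q) thus ?case using alpha_fn by blast
next
  case (s_res P a P' k) thus ?case by (cases a) auto
qed (use step_out_fo fo_fn in fastforce)+

lemma step_Pre_act: "step (Pre p P) a X' \<Longrightarrow> \<exists>k n. a = AOut k n \<or> a = AIn k n"
proof (induction "Pre p P" a X' arbitrary: p P rule: step.induct)
  case (s_alpha P' a Q) thus ?case by (auto elim: alpha_PreE)
qed auto

lemma step_bout_fresh: "step X (ABOut k n) X' \<Longrightarrow> Ch n \<notin> fn X \<and> k \<noteq> n"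
proof (induction X "ABOut k n" X' arbitrary: k n rule: step.induct)
  case (s_alpha P P' Q) thus ?case using alpha_fn by blast
next
  case (s_match p P P' c) thus ?case using step_Pre_act[OF s_match(1)] by auto
qed auto


section \<open>Equivariance of transitions under channel permutations\<close>

fun swapa :: "chan \<Rightarrow> chan \<Rightarrow> act \<Rightarrow> act" where
  "swapa u v (AOut k l) = AOut (swp u v k) (swp u v l)"
| "swapa u v (AIn k l) = AIn (swp u v k) (swp u v l)"
| "swapa u v (ABOut k l) = ABOut (swp u v k) (swp u v l)"
| "swapa u v ATau = ATau"

lemma an_swapa: "an (swapa u v a) = swapc_nm u v ` an a"
  by (cases a) auto
lemma abn_swapa: "abn (swapa u v a) = swapc_nm u v ` abn a"
  by (cases a) auto

lemma mem_swapc_nm_image[simp]: "(swapc_nm u v n \<in> swapc_nm u v ` A) = (n \<in> A)"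
  by (auto simp: image_iff)

lemma Ch_an_swapa: "(Ch (swp u v c) \<in> an (swapa u v a)) = (Ch c \<in> an a)"
  by (metis an_swapa mem_swapc_nm_image swapc_nm.simps(1))

lemma swapa_fresh: "Ch u \<notin> an b \<Longrightarrow> Ch v \<notin> an b \<Longrightarrow> swapa u v b = b"
  by (cases b) auto

lemma step_swapc: "step P a Q \<Longrightarrow> step (swapc u v P) (swapa u v a) (swapc u v Q)"
proof (induction rule: step.induct)
  case (s_in l P k x)
  have "swp u v l \<notin> bnc (swapc u v P)" using s_in by (auto simp: bnc_swapc)
  thus ?case by (simp add: subst_swapc step.s_in)
next
  case (s_res P a P' k) thus ?case using Ch_an_swapa by (auto intro: step.s_res)
next
  case (s_open P k l Q) thus ?case by (auto intro: step.s_open)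
next
  case (s_par_l P a Q R)
  have "abn (swapa u v a) \<inter> fn (swapc u v R) = {}" using s_par_l(2)
    by (auto simp: abn_swapa fn_swapc)
  thus ?case using s_par_l by (auto intro: step.s_par_l)
next
  case (s_par_r P a Q R)
  have "abn (swapa u v a) \<inter> fn (swapc u v R) = {}" using s_par_r(2)
    by (auto simp: abn_swapa fn_swapc)
  thus ?case using s_par_r by (auto intro: step.s_par_r)
next
  case (s_close_l P k l P' Q Q') thus ?case by (auto simp: Ch_fn_swapc intro: step.s_close_l)
next
  case (s_close_r P k l P' Q Q') thus ?case by (auto simp: Ch_fn_swapc intro: step.s_close_r)
next
  case (s_rep_close P k l P' P'') thus ?case by (auto simp: Ch_fn_swapc intro: step.s_rep_close)
next
  case (s_alpha P P' a Q) thus ?case using alpha_swapc step.s_alpha by blast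
qed (auto intro: step.intros)

text \<open>Finite permutations of channels, as lists of transpositions applied right to left.\<close>

fun perm_chan :: "(chan \<times> chan) list \<Rightarrow> chan \<Rightarrow> chan" where
  "perm_chan [] c = c"
| "perm_chan (q # ps) c = swp (fst q) (snd q) (perm_chan ps c)"

fun perm_nm :: "(chan \<times> chan) list \<Rightarrow> nm \<Rightarrow> nm" where
  "perm_nm [] n = n"
| "perm_nm (q # ps) n = swapc_nm (fst q) (snd q) (perm_nm ps n)"

fun perm_pre :: "(chan \<times> chan) list \<Rightarrow> prefix \<Rightarrow> prefix" where
  "perm_pre [] p = p"
| "perm_pre (q # ps) p = swapc_pre (fst q) (snd q) (perm_pre ps p)"

fun perm_proc :: "(chan \<times> chan) list \<Rightarrow> proc \<Rightarrow> proc" where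
  "perm_proc [] P = P"
| "perm_proc (q # ps) P = swapc (fst q) (snd q) (perm_proc ps P)"

fun perm_act :: "(chan \<times> chan) list \<Rightarrow> act \<Rightarrow> act" where
  "perm_act [] a = a"
| "perm_act (q # ps) a = swapa (fst q) (snd q) (perm_act ps a)"

lemma perm_chan_inj[simp]: "(perm_chan ps a = perm_chan ps b) = (a = b)"
  by (induction ps) auto

lemma perm_nm_simps[simp]: "perm_nm ps (Ch c) = Ch (perm_chan ps c)" "perm_nm ps (Var x) = Var x"
  by (induction ps) auto

lemma perm_pre_simps[simp]:
  "perm_pre ps (POut a c) = POut (perm_nm ps a) (perm_chan ps c)"
  "perm_pre ps (PIn a x) = PIn (perm_nm ps a) x"
  "perm_pre ps (PMatch a b p) = PMatch (perm_nm ps a) (perm_nm ps b) (perm_pre ps p)"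
  by (induction ps) auto

lemma perm_proc_simps[simp]:
  "perm_proc ps PNil = PNil"
  "perm_proc ps (Pre p P) = Pre (perm_pre ps p) (perm_proc ps P)"
  "perm_proc ps (Par P Q) = Par (perm_proc ps P) (perm_proc ps Q)"
  "perm_proc ps (Res c P) = Res (perm_chan ps c) (perm_proc ps P)"
  "perm_proc ps (Bang P) = Bang (perm_proc ps P)"
  by (induction ps) auto

lemma perm_act_simps[simp]:
  "perm_act ps (AOut k l) = AOut (perm_chan ps k) (perm_chan ps l)"
  "perm_act ps (AIn k l) = AIn (perm_chan ps k) (perm_chan ps l)"
  "perm_act ps (ABOut k l) = ABOut (perm_chan ps k) (perm_chan ps l)"
  "perm_act ps ATau = ATau"
  by (induction ps) auto

lemma perm_proc_PNil_iff[simp]: "(perm_proc ps P = PNil) = (P = PNil)"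
  by (cases P) auto

lemma step_perm: "step P a Q \<Longrightarrow> step (perm_proc ps P) (perm_act ps a) (perm_proc ps Q)"
  by (induction ps) (auto dest: step_swapc)

lemma alpha_perm: "alpha P Q \<Longrightarrow> alpha (perm_proc ps P) (perm_proc ps Q)"
  by (induction ps) (auto dest: alpha_swapc)

lemma Ch_fn_perm: "(Ch (perm_chan ps c) \<in> fn (perm_proc ps P)) = (Ch c \<in> fn P)"
  by (induction ps arbitrary: c) (auto simp: Ch_fn_swapc)

lemma Ch_an_perm: "(Ch (perm_chan ps c) \<in> an (perm_act ps a)) = (Ch c \<in> an a)"
  by (induction ps arbitrary: c) (auto simp: Ch_an_swapa)

abbreviation guarded_input :: "chan \<Rightarrow> var \<Rightarrow> chan \<Rightarrow> prefix \<Rightarrow> proc" where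
  "guarded_input m y l p \<equiv> Pre (PIn (Ch m) y) (Pre (PMatch (Var y) (Ch l) p) PNil)"

abbreviation plain_input :: "chan \<Rightarrow> var \<Rightarrow> proc" where
  "plain_input m y \<equiv> Pre (PIn (Ch m) y) PNil"

abbreviation handshake :: "proc \<Rightarrow> chan \<Rightarrow> chan \<Rightarrow> var \<Rightarrow> proc \<Rightarrow> proc" where
  "handshake M k l x P \<equiv> Res k (Par (Res l (Pre (POut (Ch k) l) M)) (Pre (PIn (Ch k) x) P))"

lemma rebind_eq_PMatch: "rebind y p = PMatch a b q \<Longrightarrow> \<exists>q'. p = PMatch a b q'"
  by (cases p) auto
lemma rebind_eq_PIn: "rebind y p = PIn a z \<Longrightarrow> \<exists>z'. p = PIn a z'"
  by (cases p) auto
lemma swapv_eq_PNil: "swapv x y P = PNil \<longleftrightarrow> P = PNil"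
  by (cases P) auto

lemma alpha_match_nil_shape:
  "alpha X Y \<Longrightarrow> (\<exists>q. X = Pre (PMatch a b q) PNil) = (\<exists>q. Y = Pre (PMatch a b q) PNil)"
proof (induction rule: alpha.induct)
  case (a_in_rename p x y P)
  thus ?case using rebind_eq_PMatch swapv_eq_PNil by fastforce
next
  case (a_pre P Q p) thus ?case using alpha_PNil_iff[OF a_pre(1)] by auto
qed auto

lemma alpha_guarded_input_shape:
  "alpha X Y \<Longrightarrow> (\<exists>y q. X = guarded_input m y l q) = (\<exists>y q. Y = guarded_input m y l q)"
proof (induction rule: alpha.induct)
  case (a_in_rename p x y P)
  show ?case
  proof
    assume "\<exists>y' q. Pre p P = guarded_input m y' l q"
    thus "\<exists>y' q. Pre (rebind y p) (swapv x y P) = guarded_input m y' l q" using a_in_rename by auto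
  next
    assume "\<exists>y' q. Pre (rebind y p) (swapv x y P) = guarded_input m y' l q"
    then obtain y' q where q: "rebind y p = PIn (Ch m) y'"
      "swapv x y P = Pre (PMatch (Var y') (Ch l) q) PNil"
      by auto
    then obtain z where "p = PIn (Ch m) z" using rebind_eq_PIn by blast
    hence p: "p = PIn (Ch m) x" "y' = y" using a_in_rename q by auto
    have "P = swapv x y (swapv x y P)" by simp
    also have "\<dots> = Pre (PMatch (Var x) (Ch l) (swapv_pre x y q)) PNil" using q p by simp
    finally show "\<exists>y' q. Pre p P = guarded_input m y' l q" using p by auto
  qed
next
  case (a_pre P Q p)
  thus ?case using alpha_match_nil_shape[OF a_pre(1), of "Var _" "Ch l"] by (cases p) auto
qed auto

lemma alpha_plain_input_shape:
  "alpha X Y \<Longrightarrow> (\<exists>y. X = plain_input m y) = (\<exists>y. Y = plain_input m y)"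
proof (induction rule: alpha.induct)
  case (a_in_rename p x y P)
  thus ?case using rebind_eq_PIn swapv_eq_PNil by fastforce
next
  case (a_pre P Q p) thus ?case using alpha_PNil_iff[OF a_pre(1)] by auto
qed auto

lemma alpha_plain_input: "alpha (plain_input m y) (plain_input m y')"
proof (cases "y = y'")
  case False
  have "alpha (plain_input m y) (Pre (rebind y' (PIn (Ch m) y)) (swapv y y' PNil))"
    by (rule alpha.a_in_rename) auto
  thus ?thesis by simp
qed (simp add: alpha.a_refl)

lemma step_out_inv:
  "step V a V' \<Longrightarrow> alpha (Pre (POut (Ch j) c) X) V \<Longrightarrow>
    a = AOut j c \<and> alpha V (Pre (POut (Ch j) c) V')"
proof (induction arbitrary: X rule: step.induct)
  case (s_out k l P) thus ?case by (auto elim!: alpha_Pre_nobindE intro: alpha.a_refl)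
next
  case (s_alpha P P' a Q) thus ?case by (meson alpha.a_trans)
qed (auto elim!: alpha_Pre_nobindE)

lemma step_bound_out_inv:
  "step W a W' \<Longrightarrow> alpha (Res l (Pre (POut (Ch k) l) M)) W \<Longrightarrow>
    k \<noteq> l \<and> (\<exists>l1. a = ABOut k l1 \<and> alpha W (Res l1 (Pre (POut (Ch k) l1) W')))"
proof (induction arbitrary: l M rule: step.induct)
  case (s_alpha P P' a Q)
  then obtain l1 where "k \<noteq> l" "a = ABOut k l1" "alpha P' (Res l1 (Pre (POut (Ch k) l1) Q))"
    by (meson alpha.a_trans)
  thus ?case using alpha.a_trans[OF s_alpha(1)] by blast
next
  case (s_res P a P' c)
  hence "alpha (Pre (POut (Ch (swp l c k)) c) (swapc l c M)) P" by (simp add: alpha_Res_iff)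
  from step_out_inv[OF s_res(1) this] s_res(2) show ?case by simp
next
  case (s_open P j c Q)
  from s_open(4) have fr: "c = l \<or> Ch c \<notin> fn (Pre (POut (Ch k) l) M)"
    and "alpha (Pre (POut (Ch (swp l c k)) c) (swapc l c M)) P" by (simp_all add: alpha_Res_iff)
  from step_out_inv[OF s_open(1) this(2)] have j: "j = swp l c k"
    and al: "alpha P (Pre (POut (Ch (swp l c k)) c) Q)" by auto
  have "k \<noteq> l \<and> j = k"
    using fr j s_open(2) by (cases "c = l") (auto simp: swp_def split: if_splits)
  moreover from this j have "swp l c k = k" by simp
  ultimately show ?case using al by (auto intro: alpha.a_res)
qed (auto elim!: alpha_ResE2 dest: alpha.a_sym)

lemma step_in_inv:
  "step R a R' \<Longrightarrow> alpha (Pre (PIn (Ch k) x) P) R \<Longrightarrow>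
    \<exists>n x1 P1. a = AIn k n \<and> R' = subst x1 n P1 \<and> alpha R (Pre (PIn (Ch k) x1) P1) \<and> n \<notin> bnc P1"
proof (induction arbitrary: x P rule: step.induct)
  case (s_in l P k' x')
  hence "k' = k" by (auto elim!: alpha_PreE)
  thus ?case using s_in(1) by (auto intro: alpha.a_refl)
next
  case (s_alpha P P' a Q) thus ?case by (meson alpha.a_trans)
qed (auto elim!: alpha_PreE)

lemma step_handshake_body_inv:
  "step Z a Z' \<Longrightarrow> alpha (Par (Res l (Pre (POut (Ch k) l) M)) (Pre (PIn (Ch k) x) P)) Z \<Longrightarrow>
    (\<exists>n. a = ABOut k n) \<or> (\<exists>n. a = AIn k n) \<or>
    (a = ATau \<and> (\<exists>l1 x1 P1 M1. Z' = Res l1 (Par M1 (subst x1 l1 P1)) \<and>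
      alpha Z (Par (Res l1 (Pre (POut (Ch k) l1) M1)) (Pre (PIn (Ch k) x1) P1)) \<and>
      k \<noteq> l1 \<and> l1 \<notin> bnc P1 \<and> Ch l1 \<notin> fn (Pre (PIn (Ch k) x1) P1)))"
proof (induction arbitrary: l M x P rule: step.induct)
  case (s_alpha Z0 Z a Z')
  from s_alpha(3)[OF alpha.a_trans[OF s_alpha(4) s_alpha(1)]] show ?case
    using alpha.a_trans[OF s_alpha(1)] by blast
next
  case (s_par_l W a W' R)
  hence "alpha (Res l (Pre (POut (Ch k) l) M)) W" by (auto elim!: alpha_ParE)
  from step_bound_out_inv[OF s_par_l(1) this] show ?case by auto
next
  case (s_par_r W a W' R)
  hence "alpha (Pre (PIn (Ch k) x) P) W" by (auto elim!: alpha_ParE)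
  from step_in_inv[OF s_par_r(1) this] show ?case by auto
next
  case (s_comm_l W k' n W' R R')
  hence "alpha (Res l (Pre (POut (Ch k) l) M)) W" by (auto elim!: alpha_ParE)
  from step_bound_out_inv[OF s_comm_l(1) this] show ?case by auto
next
  case (s_comm_r W k' n W' R R')
  hence "alpha (Res l (Pre (POut (Ch k) l) M)) R" by (auto elim!: alpha_ParE)
  from step_bound_out_inv[OF s_comm_r(2) this] show ?case by auto
next
  case (s_close_l W k' n W' R R')
  from s_close_l(6) have aW: "alpha (Res l (Pre (POut (Ch k) l) M)) W"
    and aR: "alpha (Pre (PIn (Ch k) x) P) R"
    by (auto elim!: alpha_ParE)
  from step_bound_out_inv[OF s_close_l(1) aW] have "k' = k"
    and W: "alpha W (Res n (Pre (POut (Ch k) n) W'))" by auto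
  moreover from step_in_inv[OF s_close_l(2) aR] obtain x1 P1 where "R' = subst x1 n P1"
    and R: "alpha R (Pre (PIn (Ch k) x1) P1)" and "n \<notin> bnc P1" by auto
  moreover have "k \<noteq> n" using step_bout_fresh[OF s_close_l(1)] \<open>k' = k\<close> by auto
  moreover have "Ch n \<notin> fn (Pre (PIn (Ch k) x1) P1)" using s_close_l(3) alpha_fn[OF R] by simp
  moreover have "alpha (Par W R) (Par (Res n (Pre (POut (Ch k) n) W')) (Pre (PIn (Ch k) x1) P1))"
    using W R by (simp add: alpha_Par_iff)
  ultimately show ?case by blast
next
  case (s_close_r W k' n W' R R')
  hence "alpha (Res l (Pre (POut (Ch k) l) M)) R" by (auto elim!: alpha_ParE)
  from step_bound_out_inv[OF s_close_r(2) this] show ?case by auto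
qed (auto elim!: alpha_ParE)

lemma step_handshake_inv:
  "step Y a Y' \<Longrightarrow> alpha (handshake M k l x P) Y \<Longrightarrow>
    a = ATau \<and> (\<exists>k1 l1 x1 P1 M1. Y' = Res k1 (Res l1 (Par M1 (subst x1 l1 P1))) \<and>
      alpha Y (handshake M1 k1 l1 x1 P1) \<and> k1 \<noteq> l1 \<and> l1 \<notin> bnc P1 \<and>
      Ch l1 \<notin> fn (Pre (PIn (Ch k1) x1) P1))"
proof (induction arbitrary: M k l x P rule: step.induct)
  case (s_alpha Y0 Y a Y')
  from s_alpha(3)[OF alpha.a_trans[OF s_alpha(4) s_alpha(1)]] show ?case
    using alpha.a_trans[OF s_alpha(1)] by blast
next
  case (s_res Z a Z' k1)
  hence "alpha (Par (Res (swp k k1 l) (Pre (POut (Ch k1) (swp k k1 l)) (swapc k k1 M)))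
      (Pre (PIn (Ch k1) x) (swapc k k1 P))) Z"
    by (simp add: alpha_Res_iff)
  from step_handshake_body_inv[OF s_res(1) this] s_res(2) show ?case
    by (auto intro!: alpha.a_res)
next
  case (s_open Z j k1 Q)
  hence "alpha (Par (Res (swp k k1 l) (Pre (POut (Ch k1) (swp k k1 l)) (swapc k k1 M)))
      (Pre (PIn (Ch k1) x) (swapc k k1 P))) Z"
    by (simp add: alpha_Res_iff)
  from step_handshake_body_inv[OF s_open(1) this] show ?case by auto
qed (auto elim!: alpha_ResE2 dest: alpha.a_sym)

lemma step_handshake:
  assumes "k \<noteq> l" "l \<notin> bnc P" "Ch l \<notin> fn (Pre (PIn (Ch k) x) P)"
  shows "step (handshake M k l x P) ATau (Res k (Res l (Par M (subst x l P))))"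
proof -
  have "step (Res l (Pre (POut (Ch k) l) M)) (ABOut k l) M"
    using assms by (intro step.s_open step.s_out)
  moreover have "step (Pre (PIn (Ch k) x) P) (AIn k l) (subst x l P)"
    using assms by (intro step.s_in)
  ultimately show ?thesis using assms by (intro step.s_res step.s_close_l) auto
qed

lemma alpha_handshake_iff:
  "alpha (handshake M k l x P) (handshake M1 k1 l1 x1 P1) \<longleftrightarrow>
    (k1 = k \<or> Ch k1 \<notin> fn (Par (Res l (Pre (POut (Ch k) l) M)) (Pre (PIn (Ch k) x) P))) \<and>
    (l1 = swp k k1 l \<or> Ch l1 \<notin> fn (Pre (POut (Ch k1) (swp k k1 l)) (swapc k k1 M))) \<and>
    k1 = swp (swp k k1 l) l1 k1 \<and>
    alpha (swapc (swp k k1 l) l1 (swapc k k1 M)) M1 \<and>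
    alpha (Pre (PIn (Ch k1) x) (swapc k k1 P)) (Pre (PIn (Ch k1) x1) P1)"
  by (simp add: alpha_Res_iff alpha_Par_iff alpha_Pre_nobind_iff)

section \<open>Pruning dead matches\<close>

text \<open>The channels in \<open>L\<close> are protected: they are bound
  further out and (by the invariant \<open>L \<inter> fo B = {}\<close> below) never sent, so no receiver can ever obtain
  them.
  The initial pair of the theorem is a rule of its own, since there \<open>l\<close> is still sent once.\<close>

inductive prune :: "chan set \<Rightarrow> proc \<Rightarrow> proc \<Rightarrow> bool" where
  prune_refl: "prune L P P"
| prune_par: "prune L P1 Q1 \<Longrightarrow> prune L P2 Q2 \<Longrightarrow> prune L (Par P1 P2) (Par Q1 Q2)"
| prune_res: "prune L' P Q \<Longrightarrow> L' - {c} \<subseteq> L \<Longrightarrow> c \<in> L' \<longrightarrow> c \<notin> fo Q \<Longrightarrow>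
    prune L (Res c P) (Res c Q)"
| prune_guard: "l \<in> L \<Longrightarrow> prune L (guarded_input m y l p) (plain_input m y')"
| prune_dead_match: "n \<noteq> l \<Longrightarrow> prune L (Pre (PMatch (Ch n) (Ch l) p) PNil) PNil"
| prune_handshake:
    "prune L (handshake (guarded_input m y l p) k l x P) (handshake (plain_input m y) k l x P)"

lemma prune_ParE[consumes 1, case_names refl par]:
  assumes "prune L (Par X R) B"
  obtains "B = Par X R"
  | Y W where "B = Par Y W" "prune L X Y" "prune L R W"
  using assms by (cases rule: prune.cases) auto

lemma prune_ResE[consumes 1, case_names refl res handshake]:
  assumes "prune L (Res c X) B"
  obtains "B = Res c X"
  | L' Y where "B = Res c Y" "prune L' X Y" "L' - {c} \<subseteq> L" "c \<in> L' \<longrightarrow> c \<notin> fo Y"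
  | m y l p x P where "Res c X = handshake (guarded_input m y l p) c l x P"
      "B = handshake (plain_input m y) c l x P"
  using assms by (cases rule: prune.cases) auto

lemma prune_PreE[consumes 1, case_names refl guard dead]:
  assumes "prune L (Pre q X) B"
  obtains "B = Pre q X"
  | m y l p y' where "Pre q X = guarded_input m y l p" "l \<in> L" "B = plain_input m y'"
  | n l p where "Pre q X = Pre (PMatch (Ch n) (Ch l) p) PNil" "n \<noteq> l" "B = PNil"
  using assms by (cases rule: prune.cases) auto

lemma prune_BangD: "prune L (Bang X) B \<Longrightarrow> B = Bang X"
  by (cases rule: prune.cases) auto

lemma prune_ParE2[consumes 1, case_names refl par]:
  assumes "prune L A (Par Y W)"
  obtains "A = Par Y W"
  | X R where "A = Par X R" "prune L X Y" "prune L R W"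
  using assms by (cases rule: prune.cases) auto

lemma prune_ResE2[consumes 1, case_names refl res handshake]:
  assumes "prune L A (Res c Y)"
  obtains "A = Res c Y"
  | L' X where "A = Res c X" "prune L' X Y" "L' - {c} \<subseteq> L" "c \<in> L' \<longrightarrow> c \<notin> fo Y"
  | m y l p x P where "A = handshake (guarded_input m y l p) c l x P"
      "Res c Y = handshake (plain_input m y) c l x P"
  using assms by (cases rule: prune.cases) auto

lemma prune_PreE2[consumes 1, case_names refl guard]:
  assumes "prune L A (Pre q Y)"
  obtains "A = Pre q Y"
  | m y l p y' where "A = guarded_input m y l p" "l \<in> L" "Pre q Y = plain_input m y'"
  using assms by (cases rule: prune.cases) auto

lemma prune_BangD2: "prune L A (Bang Y) \<Longrightarrow> A = Bang Y"
  by (erule prune.cases) auto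

lemma prune_fn: "prune L A B \<Longrightarrow> fn B \<subseteq> fn A"
  by (induction rule: prune.induct) auto

lemma prune_cong: "prune L0 A B \<Longrightarrow> (\<forall>l\<in>L0. Ch l \<in> fn A \<longrightarrow> l \<in> L1) \<Longrightarrow> prune L1 A B"
proof (induction arbitrary: L1 rule: prune.induct)
  case (prune_par L P1 Q1 P2 Q2) thus ?case by (auto intro!: prune.prune_par)
next
  case (prune_res L' P Q c L)
  let ?L1' = "L1 - {c} \<union> L' \<inter> {c}"
  have "prune ?L1' P Q" using prune_res.prems prune_res.hyps(2) by (intro prune_res.IH) auto
  thus ?case by (rule prune.prune_res) (use prune_res.hyps(3) in auto)
qed (auto intro: prune.intros)

lemma prune_swapc: "prune L A B \<Longrightarrow> prune (swp u v ` L) (swapc u v A) (swapc u v B)"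
proof (induction rule: prune.induct)
  case (prune_res L' P Q c L)
  have "swp u v ` L' - {swp u v c} \<subseteq> swp u v ` L" using prune_res.hyps(2) by auto
  thus ?case using prune_res by (auto simp: mem_fo_swapc intro!: prune.prune_res)
next
  case (prune_guard l L m y p y')
  thus ?case using prune.prune_guard[of "swp u v l"] by simp
next
  case (prune_dead_match n l L p)
  thus ?case using prune.prune_dead_match[of "swp u v n" "swp u v l"] by simp
qed (auto intro: prune.intros)

definition prune_alpha :: "chan set \<Rightarrow> proc \<Rightarrow> proc \<Rightarrow> bool" where
  "prune_alpha L A B \<longleftrightarrow> (\<exists>A1 B1. alpha A A1 \<and> prune L A1 B1 \<and> alpha B1 B)"

lemma prune_alphaI: "alpha A A1 \<Longrightarrow> prune L A1 B1 \<Longrightarrow> alpha B1 B \<Longrightarrow> prune_alpha L A B"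
  unfolding prune_alpha_def by blast

lemma alpha_prune_alpha: "alpha A B \<Longrightarrow> prune_alpha L A B"
  by (blast intro: prune_alphaI prune.prune_refl alpha.a_refl)

definition safe_input :: "chan set \<Rightarrow> proc \<Rightarrow> act \<Rightarrow> bool" where
  "safe_input L A a \<longleftrightarrow> (\<forall>k n. a = AIn k n \<longrightarrow> Ch n \<in> fn A \<longrightarrow> n \<notin> L)"

lemma safe_input_not_input[simp]:
  "safe_input L A (AOut k n)" "safe_input L A (ABOut k n)" "safe_input L A ATau"
  unfolding safe_input_def by auto

abbreviation bout_chans :: "act \<Rightarrow> chan set" where
  "bout_chans a \<equiv> {c. Ch c \<in> abn a}"

lemma prune_handshake_result:
  assumes "Ch l \<notin> fn (Pre (PIn (Ch k) x) P)"
  shows "prune L (Res k (Res l (Par (guarded_input m y l p) (subst x l P))))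
                 (Res k (Res l (Par (plain_input m y') (subst x l P))))"
proof -
  have "l \<notin> fo P" using assms fo_fn by auto
  hence "prune (insert l (L - {k})) (Par (guarded_input m y l p) (subst x l P))
           (Par (plain_input m y') (subst x l P))"
    by (intro prune.prune_par prune.prune_guard prune.prune_refl) auto
  hence "prune (L - {k}) (Res l (Par (guarded_input m y l p) (subst x l P)))
           (Res l (Par (plain_input m y') (subst x l P)))"
    by (rule prune.prune_res) (use \<open>l \<notin> fo P\<close> in auto)
  thus ?thesis by (rule prune.prune_res) auto
qed

lemma handshake_left_sim:
  assumes al: "alpha (handshake (guarded_input m y l p) k l x P) A" and st: "step A a A'"
  shows "a = ATau \<and> (\<exists>B'. step (handshake (plain_input m y) k l x P) a B' \<and> prune_alpha L A' B')"
proof -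
  from step_handshake_inv[OF st al] obtain k1 l1 x1 P1 M1 where
    a: "a = ATau" and A': "A' = Res k1 (Res l1 (Par M1 (subst x1 l1 P1)))"
    and alT: "alpha A (handshake M1 k1 l1 x1 P1)"
    and side: "k1 \<noteq> l1" "l1 \<notin> bnc P1" "Ch l1 \<notin> fn (Pre (PIn (Ch k1) x1) P1)"
    by blast
  have "alpha (handshake (guarded_input m y l p) k l x P) (handshake M1 k1 l1 x1 P1)"
    using al alT by (rule alpha.a_trans)
  note eq = this[unfolded alpha_handshake_iff]
  define m1 where "m1 = swp (swp k k1 l) l1 (swp k k1 m)"
  have "alpha (guarded_input m1 y l1 (swapc_pre (swp k k1 l) l1 (swapc_pre k k1 p))) M1"
    using eq by (simp add: m1_def)
  then obtain y1 p1 where M1: "M1 = guarded_input m1 y1 l1 p1"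
    using alpha_guarded_input_shape by blast
  have "alpha (handshake (plain_input m y) k l x P) (handshake (plain_input m1 y1) k1 l1 x1 P1)"
    unfolding alpha_handshake_iff using eq alpha_plain_input by (auto simp: m1_def)
  hence "step (handshake (plain_input m y) k l x P) ATau
           (Res k1 (Res l1 (Par (plain_input m1 y1) (subst x1 l1 P1))))"
    using step_handshake[OF side] by (rule step.s_alpha)
  moreover have "prune L A' (Res k1 (Res l1 (Par (plain_input m1 y1) (subst x1 l1 P1))))"
    unfolding A' M1 using side(3) by (rule prune_handshake_result)
  ultimately show ?thesis using a by (blast intro: prune_alphaI alpha.a_refl)
qed

lemma alpha_double_fresh_swapc:
  assumes "Ch a \<notin> fn X" "Ch b \<notin> fn X" "Ch a' \<notin> fn X" "Ch b' \<notin> fn X" "a' \<noteq> a" "a' \<noteq> b"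
    "b' \<noteq> a" "b' \<noteq> b"
  shows "alpha X (swapc a' b' (swapc a b X))"
proof -
  have "alpha X (swapc a b X)" using assms by (intro alpha_fresh_swapc)
  moreover have "alpha (swapc a b X) (swapc a' b' (swapc a b X))"
    using assms by (intro alpha_fresh_swapc) (auto simp: Ch_fn_swapc)
  ultimately show ?thesis by (rule alpha.a_trans)
qed

text \<open>In the converse direction the pruned handshake has fewer free names, so its derivative is first
  renamed apart from the names of the guarded one.\<close>

lemma handshake_right_sim:
  assumes al: "alpha (handshake (plain_input m y) k l x P) B" and st: "step B a B'"
  shows "a = ATau \<and> (\<exists>A'. step (handshake (guarded_input m y l p) k l x P) a A' \<and> prune_alpha L A' B')"
proof -
  from step_handshake_inv[OF st al] obtain k1 l1 x1 P1 M1 where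
    a: "a = ATau" and B': "B' = Res k1 (Res l1 (Par M1 (subst x1 l1 P1)))"
    and alT: "alpha B (handshake M1 k1 l1 x1 P1)"
    and side: "k1 \<noteq> l1" "l1 \<notin> bnc P1" "Ch l1 \<notin> fn (Pre (PIn (Ch k1) x1) P1)"
    by blast
  define T1 where "T1 = handshake M1 k1 l1 x1 P1"
  define A where "A = handshake (guarded_input m y l p) k l x P"
  obtain k2 where k2: "k2 \<notin> fchans A \<union> fchans T1 \<union> fchans B' \<union> {k, l, k1, l1}"
    by (erule fresh_chanE) (simp add: finite_fchans)
  define MA where "MA = Pre (POut (Ch k2) (swp k k2 l)) (swapc k k2 (guarded_input m y l p))"
  obtain l2 where l2: "l2 \<notin> fchans MA \<union> fchans T1 \<union> fchans B' \<union> {k, l, k1, l1, k2, swp k k2 l}"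
    by (erule fresh_chanE) (simp add: finite_fchans)
  define \<sigma> where "\<sigma> X = swapc l1 l2 (swapc k1 k2 X)" for X
  have fresh: "Ch k1 \<notin> fn T1" "Ch l1 \<notin> fn T1" "Ch k1 \<notin> fn B'" "Ch l1 \<notin> fn B'"
    using side unfolding T1_def B' by auto
  have alT1: "alpha T1 (\<sigma> T1)" and alB': "alpha B' (\<sigma> B')"
    unfolding \<sigma>_def using fresh k2 l2 side by (auto intro!: alpha_double_fresh_swapc)
  have \<sigma>T1: "\<sigma> T1 = handshake (\<sigma> M1) k2 l2 x1 (\<sigma> P1)"
    and \<sigma>B': "\<sigma> B' = Res k2 (Res l2 (Par (\<sigma> M1) (subst x1 l2 (\<sigma> P1))))"
    unfolding \<sigma>_def T1_def B' using k2 l2 side by (auto simp: subst_swapc swp_def)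
  have "alpha (handshake (plain_input m y) k l x P) T1"
    using al alT unfolding T1_def by (rule alpha.a_trans)
  hence alB: "alpha (handshake (plain_input m y) k l x P) (handshake (\<sigma> M1) k2 l2 x1 (\<sigma> P1))"
    using alT1 \<sigma>T1 by (metis alpha.a_trans)
  note eq = alB[unfolded alpha_handshake_iff]
  define m2 where "m2 = swp (swp k k2 l) l2 (swp k k2 m)"
  have "alpha (plain_input m2 y) (\<sigma> M1)" using eq by (simp add: m2_def)
  then obtain y2 where M1: "\<sigma> M1 = plain_input m2 y2" using alpha_plain_input_shape by blast
  define MM where "MM = guarded_input m2 y l2 (swapc_pre (swp k k2 l) l2 (swapc_pre k k2 p))"
  have side2: "k2 \<noteq> l2" "l2 \<notin> bnc (\<sigma> P1)" "Ch l2 \<notin> fn (Pre (PIn (Ch k2) x1) (\<sigma> P1))"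
  proof -
    show "k2 \<noteq> l2" "l2 \<notin> bnc (\<sigma> P1)"
      unfolding \<sigma>_def using side k2 l2 by (auto simp: bnc_swapc swp_def split: if_splits)
    have "Pre (PIn (Ch k2) x1) (\<sigma> P1) = \<sigma> (Pre (PIn (Ch k1) x1) P1)"
      unfolding \<sigma>_def using k2 l2 by (auto simp: swp_def)
    thus "Ch l2 \<notin> fn (Pre (PIn (Ch k2) x1) (\<sigma> P1))" unfolding \<sigma>_def using side k2 l2
      by (simp only: Ch_fn_swapc) (auto simp: swp_def)
  qed
  have "alpha (handshake (guarded_input m y l p) k l x P) (handshake MM k2 l2 x1 (\<sigma> P1))"
    unfolding alpha_handshake_iff
  proof (intro conjI)
    show "k2 = k \<or> Ch k2 \<notin> fn (Par (Res l (Pre (POut (Ch k) l) (guarded_input m y l p)))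
      (Pre (PIn (Ch k) x) P))"
      using k2 unfolding A_def by auto
    show "l2 = swp k k2 l \<or> Ch l2 \<notin> fn (Pre (POut (Ch k2) (swp k k2 l))
      (swapc k k2 (guarded_input m y l p)))"
      using l2 unfolding MA_def by auto
    show "k2 = swp (swp k k2 l) l2 k2" using eq by blast
    show "alpha (Pre (PIn (Ch k2) x) (swapc k k2 P)) (Pre (PIn (Ch k2) x1) (\<sigma> P1))" using eq by blast
  qed (simp add: MM_def m2_def alpha.a_refl)
  hence "step (handshake (guarded_input m y l p) k l x P) ATau
           (Res k2 (Res l2 (Par MM (subst x1 l2 (\<sigma> P1)))))"
    using step_handshake[OF side2] by (rule step.s_alpha)
  moreover have "prune L (Res k2 (Res l2 (Par MM (subst x1 l2 (\<sigma> P1))))) (\<sigma> B')"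
    unfolding \<sigma>B' M1 MM_def using side2(3) by (rule prune_handshake_result)
  ultimately show ?thesis using a alpha.a_sym[OF alB'] by (blast intro: prune_alphaI alpha.a_refl)
qed

lemma prune_alpha_cong:
  assumes "prune_alpha L0 A B" "\<forall>l\<in>L0. Ch l \<in> fn A \<longrightarrow> l \<in> L1"
  shows "prune_alpha L1 A B"
proof -
  from assms(1) obtain A1 B1 where al: "alpha A A1" and pr: "prune L0 A1 B1" and B1: "alpha B1 B"
    unfolding prune_alpha_def by blast
  have "prune L1 A1 B1"
    using pr by (rule prune_cong) (use assms(2) alpha_fn[OF al] in simp)
  thus ?thesis by (rule prune_alphaI[OF al _ B1])
qed

lemma prune_alpha_par:
  assumes "prune_alpha L A B" "prune_alpha L A' B'"
  shows "prune_alpha L (Par A A') (Par B B')"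
proof -
  from assms obtain A1 B1 A1' B1' where "alpha A A1" "prune L A1 B1" "alpha B1 B"
    "alpha A' A1'" "prune L A1' B1'" "alpha B1' B'"
    unfolding prune_alpha_def by blast
  thus ?thesis by (intro prune_alphaI[of _ "Par A1 A1'" _ "Par B1 B1'"] alpha.a_par prune.prune_par)
qed

lemma prune_alpha_res:
  assumes "prune_alpha L' A B" "L' - {c} \<subseteq> L" "c \<in> L' \<longrightarrow> c \<notin> fo B"
  shows "prune_alpha L (Res c A) (Res c B)"
proof -
  from assms(1) obtain A1 B1 where "alpha A A1" "prune L' A1 B1" and B1: "alpha B1 B"
    unfolding prune_alpha_def by blast
  moreover have "c \<in> L' \<longrightarrow> c \<notin> fo B1" using assms(3) alpha_fo[OF B1] by simp
  ultimately show ?thesis using assms(2)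
    by (intro prune_alphaI[of _ "Res c A1" _ "Res c B1"] alpha.a_res prune.prune_res)
qed

lemma safe_input_mono: "safe_input L A a \<Longrightarrow> fn X \<subseteq> fn A \<Longrightarrow> safe_input L X a"
  unfolding safe_input_def by blast

lemma alpha_Res_swapc_fresh:
  assumes "alpha (Res c Y) (Res c' Z)" "Ch d \<notin> fn Y" "Ch d \<notin> fn Z"
  shows "alpha (swapc c d Y) (swapc c' d Z)"
proof -
  have "alpha (Res d (swapc c d Y)) (Res c Y)"
    by (rule alpha.a_sym[OF alpha_Res_fresh_rename[OF assms(2)]])
  also note assms(1)
  also have "alpha (Res c' Z) (Res d (swapc c' d Z))" by (rule alpha_Res_fresh_rename[OF assms(3)])
  finally show ?thesis by (simp add: alpha_Res_iff)
qed

lemma rename_restricted_pair: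
  assumes al: "alpha (Res c X1) (Res c' X)" and pr: "prune L0 X1 Y1" and F: "finite F"
  obtains d where "d \<notin> F" "d \<noteq> c" "d \<noteq> c'" "Ch d \<notin> fn X1" "Ch d \<notin> fn X"
    "alpha (swapc c' d (swapc c d X1)) X"
    "prune (swp c' d ` swp c d ` L0) (swapc c' d (swapc c d X1)) (swapc c' d (swapc c d Y1))"
    "alpha (Res c Y1) (Res c' (swapc c' d (swapc c d Y1)))"
proof -
  obtain d where d: "d \<notin> F \<union> {c, c'} \<union> fchans X1 \<union> fchans X"
    by (erule fresh_chanE) (simp add: F finite_fchans)
  have Y1: "fn Y1 \<subseteq> fn X1" using pr by (rule prune_fn)
  have fr: "c' = c \<or> Ch c' \<notin> fn X1" using al by (simp add: alpha_Res_iff)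
  have "alpha (swapc c d X1) (swapc c' d X)" using d by (intro alpha_Res_swapc_fresh[OF al]) auto
  from alpha_swapc[OF this, of c' d] have "alpha (swapc c' d (swapc c d X1)) X" by simp
  moreover have "alpha (Res c Y1) (Res c' (swapc c' d (swapc c d Y1)))"
  proof -
    have dY: "Ch d \<notin> fn Y1" using d Y1 by auto
    have "c' = c \<or> Ch c' \<notin> fn Y1" using fr Y1 by auto
    hence "Ch d \<notin> fn (swapc c' d (swapc c d Y1))" using dY d by (auto simp: Ch_fn_swapc swp_def)
    from alpha_Res_fresh_rename[OF this, of c']
    have "alpha (Res c' (swapc c' d (swapc c d Y1))) (Res d (swapc c d Y1))" by simp
    with alpha_Res_fresh_rename[OF dY, of c] show ?thesis by (rule alpha.a_trans[OF _ alpha.a_sym])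
  qed
  moreover have "prune (swp c' d ` swp c d ` L0) (swapc c' d (swapc c d X1)) (swapc c' d (swapc c d Y1))"
    using prune_swapc[OF prune_swapc[OF pr]] .
  ultimately show ?thesis using that d by auto
qed

lemma mem_double_swp_image:
  assumes "l \<in> swp c' d ` swp c d ` L0" "l \<noteq> d" "d \<notin> L0"
  shows "(l = c' \<longrightarrow> c \<in> L0) \<and> (l \<noteq> c' \<longrightarrow> l \<noteq> c \<and> l \<in> L0)"
  using assms by (auto simp: swp_def split: if_splits)

lemma double_swp_image_fo_disjoint:
  "L0 \<inter> fo Y = {} \<Longrightarrow> swp c' d ` swp c d ` L0 \<inter> fo (swapc c' d (swapc c d Y)) = {}"
  by (auto simp: mem_fo_swapc)

section \<open>The pruned process simulates the original one\<close>

definition follows_pruned :: "proc \<Rightarrow> act \<Rightarrow> proc \<Rightarrow> bool" where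
  "follows_pruned A a A' \<longleftrightarrow> (\<forall>L A1 B1. finite L \<longrightarrow> alpha A1 A \<longrightarrow> prune L A1 B1 \<longrightarrow>
     L \<inter> fo B1 = {} \<longrightarrow> safe_input L A1 a \<longrightarrow>
     (\<exists>B'. step B1 a B' \<and> prune_alpha (L - bout_chans a) A' B'))"

lemma follows_prunedD:
  "follows_pruned A a A' \<Longrightarrow> finite L \<Longrightarrow> alpha A1 A \<Longrightarrow> prune L A1 B1 \<Longrightarrow>
    L \<inter> fo B1 = {} \<Longrightarrow> safe_input L A1 a \<Longrightarrow>
    \<exists>B'. step B1 a B' \<and> prune_alpha (L - bout_chans a) A' B'"
  unfolding follows_pruned_def by blast

lemma follows_pruned_refl:
  "alpha A1 A \<Longrightarrow> step A a A' \<Longrightarrow> \<exists>B'. step A1 a B' \<and> prune_alpha L A' B'"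
  by (blast intro: step.s_alpha alpha_prune_alpha alpha.a_refl)

lemma follows_pruned_alpha: "follows_pruned P' a Q \<Longrightarrow> alpha P P' \<Longrightarrow> follows_pruned P a Q"
  unfolding follows_pruned_def by (meson alpha.a_trans)

lemma follows_pruned_out: "follows_pruned (Pre (POut (Ch k) l) P) (AOut k l) P"
  unfolding follows_pruned_def
proof (intro allI impI)
  fix L A1 B1 assume al: "alpha A1 (Pre (POut (Ch k) l) P)" and pr: "prune L A1 B1"
  then obtain q X1 where "A1 = Pre q X1" "rebind 0 q = POut (Ch k) l" by (auto elim!: alpha_PreE2)
  with pr have "B1 = A1" by (auto elim: prune_PreE)
  thus "\<exists>B'. step B1 (AOut k l) B' \<and> prune_alpha (L - bout_chans (AOut k l)) P B'"
    using follows_pruned_refl[OF al step.s_out] by simp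
qed

lemma follows_pruned_match:
  "step (Pre p P) a P' \<Longrightarrow> follows_pruned (Pre (PMatch c c p) P) a P'"
  unfolding follows_pruned_def
proof (intro allI impI)
  fix L A1 B1 assume st: "step (Pre p P) a P'" and al: "alpha A1 (Pre (PMatch c c p) P)"
    and pr: "prune L A1 B1"
  then obtain q X1 where "A1 = Pre q X1" "rebind 0 q = PMatch c c (rebind 0 p)"
    by (auto elim!: alpha_PreE2)
  with pr have "B1 = A1" by (auto elim: prune_PreE)
  thus "\<exists>B'. step B1 a B' \<and> prune_alpha (L - bout_chans a) P' B'"
    using follows_pruned_refl[OF al step.s_match[OF st]] by simp
qed

text \<open>A pruned receiver \<open>m(y).0\<close> matches the input, and the match \<open>[n=l]\<close> left behind by the
  original is dead: by \<open>safe_input\<close>, the received \<open>n\<close> is not the protected \<open>l\<close>.\<close>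

lemma follows_pruned_in:
  "l \<notin> bnc P \<Longrightarrow> follows_pruned (Pre (PIn (Ch k) x) P) (AIn k l) (subst x l P)"
  unfolding follows_pruned_def
proof (intro allI impI)
  fix L A1 B1 assume l: "l \<notin> bnc P" and al: "alpha A1 (Pre (PIn (Ch k) x) P)"
    and pr: "prune L A1 B1" and safe: "safe_input L A1 (AIn k l)"
  have st: "step (Pre (PIn (Ch k) x) P) (AIn k l) (subst x l P)" using l by (rule step.s_in)
  from al obtain q X1 where A1: "A1 = Pre q X1" "rebind 0 q = PIn (Ch k) 0" by (auto elim!: alpha_PreE2)
  from pr[unfolded A1(1)] show "\<exists>B'. step B1 (AIn k l) B' \<and>
      prune_alpha (L - bout_chans (AIn k l)) (subst x l P) B'"
  proof (cases rule: prune_PreE)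
    case refl thus ?thesis using follows_pruned_refl[OF al st] A1 by simp
  next
    case (guard m y0 l0 p0 y')
    hence "\<exists>y q. Pre (PIn (Ch k) x) P = guarded_input m y l0 q"
      using alpha_guarded_input_shape[OF al] A1 by blast
    then obtain q' where P: "P = Pre (PMatch (Var x) (Ch l0) q') PNil" and "k = m" by auto
    have "Ch l0 \<in> fn A1" using A1(1) guard(1) by auto
    hence "l \<noteq> l0" using safe guard(2) unfolding safe_input_def by auto
    hence "prune L (subst x l P) PNil" unfolding P by (simp add: prune.prune_dead_match)
    moreover have "step B1 (AIn k l) PNil"
      using step.s_in[of l PNil m y'] guard(3) \<open>k = m\<close> by simp
    ultimately show ?thesis by (auto intro: prune_alphaI alpha.a_refl)
  next
    case dead thus ?thesis using A1 by auto
  qed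
qed

lemma follows_pruned_Bang: "step (Bang P) a A' \<Longrightarrow> follows_pruned (Bang P) a A'"
  unfolding follows_pruned_def
proof (intro allI impI)
  fix L A1 B1 assume st: "step (Bang P) a A'" and al: "alpha A1 (Bang P)" and pr: "prune L A1 B1"
  from al obtain X where "A1 = Bang X" by (auto elim: alpha_BangE2)
  with pr have "B1 = A1" using prune_BangD by simp
  thus "\<exists>B'. step B1 a B' \<and> prune_alpha (L - bout_chans a) A' B'"
    using follows_pruned_refl[OF al st] by simp
qed

lemma follows_pruned_ParI:
  assumes st: "step (Par P Q) a A'"
    and par: "\<And>L X1 Y1 R1 W1. finite L \<Longrightarrow> alpha X1 P \<Longrightarrow> alpha R1 Q \<Longrightarrow>
      prune L X1 Y1 \<Longrightarrow> prune L R1 W1 \<Longrightarrow> L \<inter> fo Y1 = {} \<Longrightarrow> L \<inter> fo W1 = {} \<Longrightarrow>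
      safe_input L X1 a \<Longrightarrow> safe_input L R1 a \<Longrightarrow>
      \<exists>B'. step (Par Y1 W1) a B' \<and> prune_alpha (L - bout_chans a) A' B'"
  shows "follows_pruned (Par P Q) a A'"
  unfolding follows_pruned_def
proof (intro allI impI)
  fix L A1 B1 assume fin: "finite L" and al: "alpha A1 (Par P Q)" and pr: "prune L A1 B1"
    and fo: "L \<inter> fo B1 = {}" and safe: "safe_input L A1 a"
  from al obtain X1 R1 where A1: "A1 = Par X1 R1" "alpha X1 P" "alpha R1 Q" by (elim alpha_ParE2)
  from pr[unfolded A1(1)] show "\<exists>B'. step B1 a B' \<and> prune_alpha (L - bout_chans a) A' B'"
  proof (cases rule: prune_ParE)
    case refl thus ?thesis using follows_pruned_refl[OF al st] A1 by simp
  next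
    case (par Y1 W1)
    have "safe_input L X1 a" "safe_input L R1 a" using safe A1 by (auto intro: safe_input_mono)
    moreover have "L \<inter> fo Y1 = {}" "L \<inter> fo W1 = {}" using fo par(1) by auto
    ultimately show ?thesis using assms(2)[OF fin A1(2,3) par(2,3)] par(1) by blast
  qed
qed

lemma follows_pruned_par_l:
  assumes st: "step P a Q" and bn: "abn a \<inter> fn R = {}" and IH: "follows_pruned P a Q"
  shows "follows_pruned (Par P R) a (Par Q R)"
proof (rule follows_pruned_ParI)
  show "step (Par P R) a (Par Q R)" using st bn by (rule step.s_par_l)
next
  fix L X1 Y1 R1 W1 assume fin: "finite L" and al: "alpha X1 P" "alpha R1 R"
    and pr: "prune L X1 Y1" "prune L R1 W1" and fo: "L \<inter> fo Y1 = {}"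
    and safe: "safe_input L X1 a"
  from follows_prunedD[OF IH fin al(1) pr(1) fo safe] obtain B'
    where stY: "step Y1 a B'" and Q: "prune_alpha (L - bout_chans a) Q B'" by blast
  have fnR: "fn R1 = fn R" using alpha_fn[OF al(2)] .
  have "step (Par Y1 W1) a (Par B' W1)"
    using stY bn prune_fn[OF pr(2)] fnR by (intro step.s_par_l) auto
  moreover have "prune (L - bout_chans a) R1 W1"
    using pr(2) by (rule prune_cong) (use bn fnR in auto)
  hence "prune_alpha (L - bout_chans a) R W1"
    by (rule prune_alphaI[OF alpha.a_sym[OF al(2)] _ alpha.a_refl])
  ultimately show "\<exists>B'. step (Par Y1 W1) a B' \<and> prune_alpha (L - bout_chans a) (Par Q R) B'"
    using Q by (blast intro: prune_alpha_par)
qed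

lemma follows_pruned_par_r:
  assumes st: "step P a Q" and bn: "abn a \<inter> fn R = {}" and IH: "follows_pruned P a Q"
  shows "follows_pruned (Par R P) a (Par R Q)"
proof (rule follows_pruned_ParI)
  show "step (Par R P) a (Par R Q)" using st bn by (rule step.s_par_r)
next
  fix L R1 W1 X1 Y1 assume fin: "finite L" and al: "alpha R1 R" "alpha X1 P"
    and pr: "prune L R1 W1" "prune L X1 Y1" and fo: "L \<inter> fo Y1 = {}"
    and safe: "safe_input L X1 a"
  from follows_prunedD[OF IH fin al(2) pr(2) fo safe] obtain B'
    where stY: "step Y1 a B'" and Q: "prune_alpha (L - bout_chans a) Q B'" by blast
  have fnR: "fn R1 = fn R" using alpha_fn[OF al(1)] .
  have "step (Par W1 Y1) a (Par W1 B')"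
    using stY bn prune_fn[OF pr(1)] fnR by (intro step.s_par_r) auto
  moreover have "prune (L - bout_chans a) R1 W1"
    using pr(1) by (rule prune_cong) (use bn fnR in auto)
  hence "prune_alpha (L - bout_chans a) R W1"
    by (rule prune_alphaI[OF alpha.a_sym[OF al(1)] _ alpha.a_refl])
  ultimately show "\<exists>B'. step (Par W1 Y1) a B' \<and> prune_alpha (L - bout_chans a) (Par R Q) B'"
    using Q by (blast intro: prune_alpha_par)
qed

text \<open>The channel passed in a communication is an output object, hence not protected.\<close>

lemma follows_pruned_comm:
  assumes st: "step P (AOut k l) P'" "step Q (AIn k l) Q'"
    and IH: "follows_pruned P (AOut k l) P'" "follows_pruned Q (AIn k l) Q'"
    and fin: "finite L" and al: "alpha X1 P" "alpha R1 Q" and pr: "prune L X1 Y1" "prune L R1 W1"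
    and fo: "L \<inter> fo Y1 = {}" "L \<inter> fo W1 = {}"
  obtains B1 B2 where "step Y1 (AOut k l) B1" "step W1 (AIn k l) B2"
    "prune_alpha L P' B1" "prune_alpha L Q' B2"
proof -
  from follows_prunedD[OF IH(1) fin al(1) pr(1) fo(1)] obtain B1
    where stY: "step Y1 (AOut k l) B1" and "prune_alpha L P' B1" by auto
  moreover have "l \<notin> L" using step_out_fo[OF stY] fo(1) by auto
  hence "safe_input L R1 (AIn k l)" unfolding safe_input_def by auto
  from follows_prunedD[OF IH(2) fin al(2) pr(2) fo(2) this] obtain B2
    where "step W1 (AIn k l) B2" and "prune_alpha L Q' B2" by auto
  ultimately show ?thesis using that by blast
qed

lemma follows_pruned_comm_l:
  assumes st: "step P (AOut k l) P'" "step Q (AIn k l) Q'"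
    and IH: "follows_pruned P (AOut k l) P'" "follows_pruned Q (AIn k l) Q'"
  shows "follows_pruned (Par P Q) ATau (Par P' Q')"
proof (rule follows_pruned_ParI)
  show "step (Par P Q) ATau (Par P' Q')" using st by (rule step.s_comm_l)
next
  fix L X1 Y1 R1 W1 assume "finite L" "alpha X1 P" "alpha R1 Q" "prune L X1 Y1" "prune L R1 W1"
    "L \<inter> fo Y1 = {}" "L \<inter> fo W1 = {}"
  from follows_pruned_comm[OF st IH this] obtain B1 B2 where
    "step Y1 (AOut k l) B1" "step W1 (AIn k l) B2" "prune_alpha L P' B1" "prune_alpha L Q' B2" .
  thus "\<exists>B'. step (Par Y1 W1) ATau B' \<and> prune_alpha (L - bout_chans ATau) (Par P' Q') B'"
    by (auto intro: step.s_comm_l prune_alpha_par)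
qed

lemma follows_pruned_comm_r:
  assumes st: "step P (AOut k l) P'" "step Q (AIn k l) Q'"
    and IH: "follows_pruned P (AOut k l) P'" "follows_pruned Q (AIn k l) Q'"
  shows "follows_pruned (Par Q P) ATau (Par Q' P')"
proof (rule follows_pruned_ParI)
  show "step (Par Q P) ATau (Par Q' P')" using st by (rule step.s_comm_r)
next
  fix L R1 W1 X1 Y1 assume fin: "finite L" and al: "alpha R1 Q" "alpha X1 P"
    and pr: "prune L R1 W1" "prune L X1 Y1" and fo: "L \<inter> fo W1 = {}" "L \<inter> fo Y1 = {}"
  from follows_pruned_comm[OF st IH fin al(2,1) pr(2,1) fo(2,1)] obtain B1 B2 where
    "step Y1 (AOut k l) B1" "step W1 (AIn k l) B2" "prune_alpha L P' B1" "prune_alpha L Q' B2" .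
  thus "\<exists>B'. step (Par W1 Y1) ATau B' \<and> prune_alpha (L - bout_chans ATau) (Par Q' P') B'"
    by (auto intro: step.s_comm_r prune_alpha_par)
qed

text \<open>In a close the extruded channel is not free in the receiver, so it may be dropped from the
  protected set there.\<close>

lemma follows_pruned_close:
  assumes IH: "follows_pruned P (ABOut k l) P'" "follows_pruned Q (AIn k l) Q'"
    and fr: "Ch l \<notin> fn Q"
    and fin: "finite L" and al: "alpha X1 P" "alpha R1 Q" and pr: "prune L X1 Y1" "prune L R1 W1"
    and fo: "L \<inter> fo Y1 = {}" "L \<inter> fo W1 = {}"
  obtains B1 B2 where "step Y1 (ABOut k l) B1" "step W1 (AIn k l) B2" "Ch l \<notin> fn W1"
    "prune_alpha (L - {l}) P' B1" "prune_alpha (L - {l}) Q' B2"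
proof -
  from follows_prunedD[OF IH(1) fin al(1) pr(1) fo(1)] obtain B1
    where "step Y1 (ABOut k l) B1" and "prune_alpha (L - {l}) P' B1" by auto
  moreover have fnR: "fn R1 = fn Q" using alpha_fn[OF al(2)] .
  have "prune (L - {l}) R1 W1" using pr(2) by (rule prune_cong) (use fr fnR in auto)
  moreover have "(L - {l}) \<inter> fo W1 = {}" "safe_input (L - {l}) R1 (AIn k l)"
    using fo(2) unfolding safe_input_def by auto
  ultimately have "\<exists>B2. step W1 (AIn k l) B2 \<and> prune_alpha (L - {l}) Q' B2"
    using follows_prunedD[OF IH(2) finite_Diff[OF fin] al(2)] by simp
  then obtain B2 where "step W1 (AIn k l) B2" and "prune_alpha (L - {l}) Q' B2" by blast
  moreover have "Ch l \<notin> fn W1" using prune_fn[OF pr(2)] fnR fr by auto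
  ultimately show ?thesis using that \<open>step Y1 (ABOut k l) B1\<close> \<open>prune_alpha (L - {l}) P' B1\<close>
    by blast
qed

lemma prune_alpha_close:
  "prune_alpha (L - {l}) P B1 \<Longrightarrow> prune_alpha (L - {l}) Q B2 \<Longrightarrow>
    prune_alpha L (Res l (Par P Q)) (Res l (Par B1 B2))"
  by (rule prune_alpha_res[OF prune_alpha_par]) auto

lemma follows_pruned_close_l:
  assumes st: "step P (ABOut k l) P'" "step Q (AIn k l) Q'" "Ch l \<notin> fn Q"
    and IH: "follows_pruned P (ABOut k l) P'" "follows_pruned Q (AIn k l) Q'"
  shows "follows_pruned (Par P Q) ATau (Res l (Par P' Q'))"
proof (rule follows_pruned_ParI)
  show "step (Par P Q) ATau (Res l (Par P' Q'))" using st by (rule step.s_close_l)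
next
  fix L X1 Y1 R1 W1 assume "finite L" "alpha X1 P" "alpha R1 Q" "prune L X1 Y1" "prune L R1 W1"
    "L \<inter> fo Y1 = {}" "L \<inter> fo W1 = {}"
  from follows_pruned_close[OF IH st(3) this] obtain B1 B2 where
    "step Y1 (ABOut k l) B1" "step W1 (AIn k l) B2" "Ch l \<notin> fn W1"
    "prune_alpha (L - {l}) P' B1" "prune_alpha (L - {l}) Q' B2" .
  thus "\<exists>B'. step (Par Y1 W1) ATau B' \<and>
      prune_alpha (L - bout_chans ATau) (Res l (Par P' Q')) B'"
    by (auto intro: step.s_close_l prune_alpha_close)
qed

lemma follows_pruned_close_r:
  assumes st: "step P (ABOut k l) P'" "step Q (AIn k l) Q'" "Ch l \<notin> fn Q"
    and IH: "follows_pruned P (ABOut k l) P'" "follows_pruned Q (AIn k l) Q'"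
  shows "follows_pruned (Par Q P) ATau (Res l (Par Q' P'))"
proof (rule follows_pruned_ParI)
  show "step (Par Q P) ATau (Res l (Par Q' P'))" using st by (rule step.s_close_r)
next
  fix L R1 W1 X1 Y1 assume fin: "finite L" and al: "alpha R1 Q" "alpha X1 P"
    and pr: "prune L R1 W1" "prune L X1 Y1" and fo: "L \<inter> fo W1 = {}" "L \<inter> fo Y1 = {}"
  from follows_pruned_close[OF IH st(3) fin al(2,1) pr(2,1) fo(2,1)] obtain B1 B2 where
    "step Y1 (ABOut k l) B1" "step W1 (AIn k l) B2" "Ch l \<notin> fn W1"
    "prune_alpha (L - {l}) P' B1" "prune_alpha (L - {l}) Q' B2" .
  thus "\<exists>B'. step (Par W1 Y1) ATau B' \<and>
      prune_alpha (L - bout_chans ATau) (Res l (Par Q' P')) B'"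
    by (auto intro: step.s_close_r prune_alpha_close)
qed

lemma follows_pruned_res_prune:
  assumes st: "step P a P'" and c': "Ch c' \<notin> an a" and IH: "follows_pruned P a P'"
    and fin: "finite L" and al: "alpha (Res c X1) (Res c' P)"
    and pr: "prune L0 X1 Y1" "L0 - {c} \<subseteq> L" "c \<in> L0 \<longrightarrow> c \<notin> fo Y1"
    and fo: "L \<inter> fo (Res c Y1) = {}" and safe: "safe_input L (Res c X1) a"
  shows "\<exists>B'. step (Res c Y1) a B' \<and> prune_alpha (L - bout_chans a) (Res c' P') B'"
proof -
  obtain d where d: "d \<notin> L \<union> aobj a \<union> {e. Ch e \<in> an a}" "d \<noteq> c" "d \<noteq> c'" "Ch d \<notin> fn P"
    and alX: "alpha (swapc c' d (swapc c d X1)) P"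
    and prd: "prune (swp c' d ` swp c d ` L0) (swapc c' d (swapc c d X1)) (swapc c' d (swapc c d Y1))"
    and alY: "alpha (Res c Y1) (Res c' (swapc c' d (swapc c d Y1)))"
    by (rule rename_restricted_pair[OF al pr(1), where F = "L \<union> aobj a \<union> {e. Ch e \<in> an a}"])
      (simp_all add: fin finite_aobj finite_an_chans)
  define X' Y' L' where "X' = swapc c' d (swapc c d X1)" and "Y' = swapc c' d (swapc c d Y1)"
    and "L' = swp c' d ` swp c d ` L0"
  have dL0: "d \<notin> L0" using pr(2) d by auto
  have "L0 \<inter> fo Y1 = {}" using fo pr(2,3) by auto
  hence foY: "L' \<inter> fo Y' = {}" unfolding L'_def Y'_def by (rule double_swp_image_fo_disjoint)
  have "finite L0" using finite_subset[of L0 "insert c L"] fin pr(2) by auto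
  hence finL': "finite L'" unfolding L'_def by simp
  have "safe_input L' X' a" unfolding safe_input_def
  proof (intro allI impI)
    fix k n assume an: "a = AIn k n" and "Ch n \<in> fn X'"
    hence nP: "Ch n \<in> fn P" using alpha_fn[OF alX] unfolding X'_def by simp
    moreover have "n \<noteq> c'" "n \<noteq> d" using c' d an nP by auto
    ultimately have "Ch n \<in> fn (Res c X1)" using alpha_fn[OF al] by simp
    hence "n \<notin> L" "n \<noteq> c" using safe an unfolding safe_input_def by auto
    thus "n \<notin> L'" using mem_double_swp_image[of n c' d c L0] \<open>n \<noteq> c'\<close> \<open>n \<noteq> d\<close> dL0 pr(2)
      unfolding L'_def by auto
  qed
  with follows_prunedD[OF IH finL' alX[folded X'_def] prd[folded X'_def Y'_def L'_def] foY]
  obtain B'' where stY: "step Y' a B''" and P': "prune_alpha (L' - bout_chans a) P' B''" by blast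
  have "step (Res c Y1) a (Res c' B'')"
    using alY step.s_res[OF stY c'] unfolding Y'_def by (rule step.s_alpha)
  moreover have "prune_alpha (L - bout_chans a) (Res c' P') (Res c' B'')"
  proof (rule prune_alpha_res)
    have "Ch d \<notin> fn P'" using step_fn[OF st] d by auto
    thus "prune_alpha (L' - bout_chans a - {d}) P' B''"
      by (intro prune_alpha_cong[OF P']) auto
    show "L' - bout_chans a - {d} - {c'} \<subseteq> L - bout_chans a"
    proof
      fix l assume l: "l \<in> L' - bout_chans a - {d} - {c'}"
      hence "l \<in> L0 - {c}" using mem_double_swp_image[of l c' d c L0] dL0 unfolding L'_def by auto
      thus "l \<in> L - bout_chans a" using l pr(2) by auto
    qed
    have "c' \<notin> fo B''" if "c \<in> L0"
    proof -
      have "c' \<notin> fo Y'" using pr(3) that unfolding Y'_def by (simp add: mem_fo_swapc)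
      moreover have "c' \<notin> aobj a" using c' aobj_an by blast
      ultimately show ?thesis using step_fo[OF stY] by blast
    qed
    thus "c' \<in> L' - bout_chans a - {d} \<longrightarrow> c' \<notin> fo B''"
      using mem_double_swp_image[of c' c' d c L0] dL0 d(3) unfolding L'_def by auto
  qed
  ultimately show ?thesis by blast
qed

lemma follows_pruned_res:
  assumes st: "step P a P'" and c': "Ch c' \<notin> an a" and IH: "follows_pruned P a P'"
  shows "follows_pruned (Res c' P) a (Res c' P')"
  unfolding follows_pruned_def
proof (intro allI impI)
  fix L A1 B1 assume fin: "finite L" and al: "alpha A1 (Res c' P)" and pr: "prune L A1 B1"
    and fo: "L \<inter> fo B1 = {}" and safe: "safe_input L A1 a"
  have stA: "step (Res c' P) a (Res c' P')" using st c' by (rule step.s_res)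
  from al obtain c X1 where A1: "A1 = Res c X1" by (elim alpha_ResE2)
  from pr[unfolded A1] show "\<exists>B'. step B1 a B' \<and> prune_alpha (L - bout_chans a) (Res c' P') B'"
  proof (cases rule: prune_ResE)
    case refl thus ?thesis using follows_pruned_refl[OF al stA] A1 by simp
  next
    case (res L0 Y1)
    thus ?thesis using follows_pruned_res_prune[OF st c' IH fin al[unfolded A1]] fo safe A1 by simp
  next
    case (handshake m y l p x Q)
    with al A1 have "alpha (handshake (guarded_input m y l p) c l x Q) (Res c' P)" by simp
    from handshake_left_sim[OF this stA] handshake(2) show ?thesis by auto
  qed
qed

text \<open>A protected channel is never an output object of the pruned side, so it cannot be the
  extruded one.\<close>

lemma follows_pruned_open:
  assumes st: "step P (AOut k c') Q" and kc: "k \<noteq> c'" and IH: "follows_pruned P (AOut k c') Q"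
  shows "follows_pruned (Res c' P) (ABOut k c') Q"
  unfolding follows_pruned_def
proof (intro allI impI)
  fix L A1 B1 assume fin: "finite L" and al: "alpha A1 (Res c' P)" and pr: "prune L A1 B1"
    and fo: "L \<inter> fo B1 = {}"
  have stA: "step (Res c' P) (ABOut k c') Q" using st kc by (rule step.s_open)
  from al obtain c X1 where A1: "A1 = Res c X1" by (elim alpha_ResE2)
  from pr[unfolded A1] show "\<exists>B'. step B1 (ABOut k c') B' \<and>
      prune_alpha (L - bout_chans (ABOut k c')) Q B'"
  proof (cases rule: prune_ResE)
    case refl thus ?thesis using follows_pruned_refl[OF al stA] A1 by simp
  next
    case (res L0 Y1)
    obtain d where d: "d \<notin> L \<union> {k, c'}" "d \<noteq> c" "d \<noteq> c'" "Ch d \<notin> fn P"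
      and alX: "alpha (swapc c' d (swapc c d X1)) P"
      and prd: "prune (swp c' d ` swp c d ` L0) (swapc c' d (swapc c d X1)) (swapc c' d (swapc c d Y1))"
      and alY: "alpha (Res c Y1) (Res c' (swapc c' d (swapc c d Y1)))"
      by (rule rename_restricted_pair[OF al[unfolded A1] res(2), where F = "L \<union> {k, c'}"])
        (simp_all add: fin)
    define Y' L' where "Y' = swapc c' d (swapc c d Y1)" and "L' = swp c' d ` swp c d ` L0"
    have dL0: "d \<notin> L0" using res(3) d by auto
    have "L0 \<inter> fo Y1 = {}" using fo res(1,3,4) by auto
    hence foY: "L' \<inter> fo Y' = {}" unfolding L'_def Y'_def by (rule double_swp_image_fo_disjoint)
    have "finite L0" using finite_subset[of L0 "insert c L"] fin res(3) by auto
    hence "finite L'" unfolding L'_def by simp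
    from follows_prunedD[OF IH this alX prd[folded Y'_def L'_def] foY safe_input_not_input(1)]
    obtain B'' where stY: "step Y' (AOut k c') B''" and Q: "prune_alpha L' Q B''" by auto
    have "c \<notin> L0"
    proof
      assume "c \<in> L0"
      hence "c' \<notin> fo Y'" using res(4) unfolding Y'_def by (simp add: mem_fo_swapc)
      thus False using step_out_fo[OF stY] by simp
    qed
    have "step B1 (ABOut k c') B''"
      using alY step.s_open[OF stY kc] unfolding res(1) Y'_def by (rule step.s_alpha)
    moreover have "prune_alpha (L - {c'}) Q B''"
    proof (rule prune_alpha_cong[OF Q], intro ballI impI)
      fix l assume l: "l \<in> L'" "Ch l \<in> fn Q"
      have "l \<noteq> d" using l(2) step_fn[OF st] d by auto
      have "(l = c' \<longrightarrow> c \<in> L0) \<and> (l \<noteq> c' \<longrightarrow> l \<noteq> c \<and> l \<in> L0)"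
        by (rule mem_double_swp_image[OF l(1)[unfolded L'_def] \<open>l \<noteq> d\<close> dL0])
      thus "l \<in> L - {c'}" using \<open>c \<notin> L0\<close> res(3) by auto
    qed
    ultimately show ?thesis by auto
  next
    case (handshake m y l p x Q')
    with al A1 have "alpha (handshake (guarded_input m y l p) c l x Q') (Res c' P)" by simp
    from handshake_left_sim[OF this stA] show ?thesis by simp
  qed
qed

theorem step_follows_pruned: "step A a A' \<Longrightarrow> follows_pruned A a A'"
proof (induction rule: step.induct)
  case (s_out k l P) show ?case by (rule follows_pruned_out)
next
  case (s_in l P k x) thus ?case by (rule follows_pruned_in)
next
  case (s_match p P a P' c) show ?case by (rule follows_pruned_match[OF s_match(1)])
next
  case (s_res P a P' k) thus ?case by (rule follows_pruned_res)
next
  case (s_open P k l Q) thus ?case by (rule follows_pruned_open)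
next
  case (s_par_l P a Q R) thus ?case by (rule follows_pruned_par_l)
next
  case (s_par_r P a Q R) thus ?case by (rule follows_pruned_par_r)
next
  case (s_comm_l P k l P' Q Q') thus ?case by (rule follows_pruned_comm_l)
next
  case (s_comm_r P k l P' Q Q') thus ?case by (rule follows_pruned_comm_r)
next
  case (s_close_l P k l P' Q Q') thus ?case by (rule follows_pruned_close_l)
next
  case (s_close_r P k l P' Q Q') thus ?case by (rule follows_pruned_close_r)
next
  case (s_rep_act P a P') show ?case by (rule follows_pruned_Bang[OF step.s_rep_act[OF s_rep_act(1)]])
next
  case (s_rep_comm P k l P' P'') show ?case
    by (rule follows_pruned_Bang[OF step.s_rep_comm[OF s_rep_comm(1,2)]])
next
  case (s_rep_close P k l P' P'') show ?case
    by (rule follows_pruned_Bang[OF step.s_rep_close[OF s_rep_close(1,2,3)]])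
next
  case (s_alpha P P' a Q) show ?case by (rule follows_pruned_alpha[OF s_alpha(3,1)])
qed

section \<open>The original process simulates the pruned one\<close>

text \<open>Unlike in \<open>follows_pruned\<close>, a restricted channel can only be renamed on the pruned side,
  because the unpruned side may have more free names; hence the quantification over renamings.\<close>

definition follows_unpruned :: "proc \<Rightarrow> act \<Rightarrow> proc \<Rightarrow> bool" where
  "follows_unpruned B a B' \<longleftrightarrow> (\<forall>L A1 B1 ps. finite L \<longrightarrow> prune L A1 B1 \<longrightarrow>
     alpha B1 (perm_proc ps B) \<longrightarrow> L \<inter> fo B1 = {} \<longrightarrow> safe_input L A1 (perm_act ps a) \<longrightarrow>
     abn (perm_act ps a) \<inter> fn A1 = {} \<longrightarrow>
     (\<exists>A'. step A1 (perm_act ps a) A' \<and>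
       prune_alpha (L - bout_chans (perm_act ps a)) A' (perm_proc ps B')))"

lemma follows_unprunedD:
  "follows_unpruned B a B' \<Longrightarrow> finite L \<Longrightarrow> prune L A1 B1 \<Longrightarrow> alpha B1 (perm_proc ps B) \<Longrightarrow>
    L \<inter> fo B1 = {} \<Longrightarrow> safe_input L A1 (perm_act ps a) \<Longrightarrow> abn (perm_act ps a) \<inter> fn A1 = {} \<Longrightarrow>
    \<exists>A'. step A1 (perm_act ps a) A' \<and>
      prune_alpha (L - bout_chans (perm_act ps a)) A' (perm_proc ps B')"
  unfolding follows_unpruned_def by blast

lemma follows_unpruned_refl:
  assumes "alpha B1 (perm_proc ps B)" "step B a B'"
  shows "\<exists>A'. step B1 (perm_act ps a) A' \<and> prune_alpha L A' (perm_proc ps B')"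
  using step.s_alpha[OF assms(1) step_perm[OF assms(2)]] alpha_prune_alpha[OF alpha.a_refl] by blast

lemma follows_unpruned_alpha: "follows_unpruned P' a Q \<Longrightarrow> alpha P P' \<Longrightarrow> follows_unpruned P a Q"
  unfolding follows_unpruned_def by (meson alpha.a_trans alpha_perm)

lemma follows_unpruned_out: "follows_unpruned (Pre (POut (Ch k) l) P) (AOut k l) P"
  unfolding follows_unpruned_def
proof (intro allI impI)
  fix L A1 B1 ps assume pr: "prune L A1 B1" and al: "alpha B1 (perm_proc ps (Pre (POut (Ch k) l) P))"
  then obtain q Y1 where "B1 = Pre q Y1" "rebind 0 q = POut (Ch (perm_chan ps k)) (perm_chan ps l)"
    by (auto elim!: alpha_PreE2)
  with pr have "A1 = B1" by (auto elim: prune_PreE2)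
  thus "\<exists>A'. step A1 (perm_act ps (AOut k l)) A' \<and>
      prune_alpha (L - bout_chans (perm_act ps (AOut k l))) A' (perm_proc ps P)"
    using follows_unpruned_refl[OF al step.s_out] by simp
qed

lemma follows_unpruned_match:
  "step (Pre p P) a P' \<Longrightarrow> follows_unpruned (Pre (PMatch c c p) P) a P'"
  unfolding follows_unpruned_def
proof (intro allI impI)
  fix L A1 B1 ps assume st: "step (Pre p P) a P'" and pr: "prune L A1 B1"
    and al: "alpha B1 (perm_proc ps (Pre (PMatch c c p) P))"
  then obtain q Y1 where "B1 = Pre q Y1"
    "rebind 0 q = PMatch (perm_nm ps c) (perm_nm ps c) (rebind 0 (perm_pre ps p))"
    by (auto elim!: alpha_PreE2)
  with pr have "A1 = B1" by (auto elim: prune_PreE2)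
  thus "\<exists>A'. step A1 (perm_act ps a) A' \<and> prune_alpha (L - bout_chans (perm_act ps a)) A' (perm_proc ps P')"
    using follows_unpruned_refl[OF al step.s_match[OF st]] by simp
qed

lemma follows_unpruned_in:
  "l \<notin> bnc P \<Longrightarrow> follows_unpruned (Pre (PIn (Ch k) x) P) (AIn k l) (subst x l P)"
  unfolding follows_unpruned_def
proof (intro allI impI)
  fix L A1 B1 ps assume l: "l \<notin> bnc P" and pr: "prune L A1 B1"
    and al: "alpha B1 (perm_proc ps (Pre (PIn (Ch k) x) P))" and safe: "safe_input L A1 (perm_act ps (AIn k l))"
  have st: "step (Pre (PIn (Ch k) x) P) (AIn k l) (subst x l P)" using l by (rule step.s_in)
  from al obtain q Y1 where B1: "B1 = Pre q Y1" "rebind 0 q = PIn (Ch (perm_chan ps k)) 0"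
    by (auto elim!: alpha_PreE2)
  from pr[unfolded B1(1)] show "\<exists>A'. step A1 (perm_act ps (AIn k l)) A' \<and>
      prune_alpha (L - bout_chans (perm_act ps (AIn k l))) A' (perm_proc ps (subst x l P))"
  proof (cases rule: prune_PreE2)
    case refl thus ?thesis using follows_unpruned_refl[OF al st] B1 by simp
  next
    case (guard m y l0 p y')
    hence "\<exists>y. perm_proc ps (Pre (PIn (Ch k) x) P) = plain_input m y"
      using alpha_plain_input_shape[OF al] B1 by blast
    hence m: "perm_chan ps k = m" and P: "P = PNil" by auto
    have "Ch l0 \<in> fn A1" using guard(1) by auto
    hence "perm_chan ps l \<noteq> l0" using safe guard(2) unfolding safe_input_def by auto
    hence "prune L (Pre (PMatch (Ch (perm_chan ps l)) (Ch l0) (subst_pre y (perm_chan ps l) p)) PNil) PNil"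
      by (rule prune.prune_dead_match)
    moreover have "step A1 (AIn m (perm_chan ps l))
        (Pre (PMatch (Ch (perm_chan ps l)) (Ch l0) (subst_pre y (perm_chan ps l) p)) PNil)"
      unfolding guard(1) using step.s_in[of "perm_chan ps l" "Pre (PMatch (Var y) (Ch l0) p) PNil" m y]
      by (simp split: if_splits)
    ultimately show ?thesis using m P by (auto intro: prune_alphaI alpha.a_refl)
  qed
qed

lemma follows_unpruned_Bang: "step (Bang P) a B' \<Longrightarrow> follows_unpruned (Bang P) a B'"
  unfolding follows_unpruned_def
proof (intro allI impI)
  fix L A1 B1 ps assume st: "step (Bang P) a B'" and pr: "prune L A1 B1"
    and al: "alpha B1 (perm_proc ps (Bang P))"
  from al obtain Y where "B1 = Bang Y" by (auto elim: alpha_BangE2)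
  with pr have "A1 = B1" using prune_BangD2 by simp
  thus "\<exists>A'. step A1 (perm_act ps a) A' \<and> prune_alpha (L - bout_chans (perm_act ps a)) A' (perm_proc ps B')"
    using follows_unpruned_refl[OF al st] by simp
qed

lemma prune_alpha_alpha:
  assumes "prune_alpha L A B" "alpha B C"
  shows "prune_alpha L A C"
proof -
  from assms(1) obtain A1 B1 where "alpha A A1" "prune L A1 B1" "alpha B1 B"
    unfolding prune_alpha_def by blast
  thus ?thesis using alpha.a_trans[OF \<open>alpha B1 B\<close> assms(2)] by (blast intro: prune_alphaI)
qed

lemma follows_unpruned_ParI:
  assumes st: "step (Par P Q) a B'"
    and par: "\<And>L X1 Y1 R1 W1 ps. finite L \<Longrightarrow> prune L X1 Y1 \<Longrightarrow> prune L R1 W1 \<Longrightarrow>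
      alpha Y1 (perm_proc ps P) \<Longrightarrow> alpha W1 (perm_proc ps Q) \<Longrightarrow>
      L \<inter> fo Y1 = {} \<Longrightarrow> L \<inter> fo W1 = {} \<Longrightarrow>
      safe_input L X1 (perm_act ps a) \<Longrightarrow> safe_input L R1 (perm_act ps a) \<Longrightarrow>
      abn (perm_act ps a) \<inter> fn X1 = {} \<Longrightarrow> abn (perm_act ps a) \<inter> fn R1 = {} \<Longrightarrow>
      \<exists>A'. step (Par X1 R1) (perm_act ps a) A' \<and>
        prune_alpha (L - bout_chans (perm_act ps a)) A' (perm_proc ps B')"
  shows "follows_unpruned (Par P Q) a B'"
  unfolding follows_unpruned_def
proof (intro allI impI)
  fix L A1 B1 ps assume fin: "finite L" and pr: "prune L A1 B1"
    and al: "alpha B1 (perm_proc ps (Par P Q))" and fo: "L \<inter> fo B1 = {}"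
    and safe: "safe_input L A1 (perm_act ps a)" and bn: "abn (perm_act ps a) \<inter> fn A1 = {}"
  from al obtain Y1 W1 where B1: "B1 = Par Y1 W1" "alpha Y1 (perm_proc ps P)" "alpha W1 (perm_proc ps Q)"
    by (auto elim: alpha_ParE2)
  from pr[unfolded B1(1)] show "\<exists>A'. step A1 (perm_act ps a) A' \<and>
      prune_alpha (L - bout_chans (perm_act ps a)) A' (perm_proc ps B')"
  proof (cases rule: prune_ParE2)
    case refl thus ?thesis using follows_unpruned_refl[OF al st] B1 by simp
  next
    case (par X1 R1)
    have "safe_input L X1 (perm_act ps a)" "safe_input L R1 (perm_act ps a)"
      using safe par(1) by (auto intro: safe_input_mono)
    moreover have "abn (perm_act ps a) \<inter> fn X1 = {}" "abn (perm_act ps a) \<inter> fn R1 = {}"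
      using bn par(1) by auto
    moreover have "L \<inter> fo Y1 = {}" "L \<inter> fo W1 = {}" using fo B1(1) by auto
    ultimately show ?thesis using assms(2)[OF fin par(2,3) B1(2,3)] par(1) by simp
  qed
qed

lemma follows_unpruned_par_l:
  assumes st: "step P a Q" and bn: "abn a \<inter> fn R = {}" and IH: "follows_unpruned P a Q"
  shows "follows_unpruned (Par P R) a (Par Q R)"
proof (rule follows_unpruned_ParI)
  show "step (Par P R) a (Par Q R)" using st bn by (rule step.s_par_l)
next
  fix L X1 Y1 R1 W1 ps assume fin: "finite L" and pr: "prune L X1 Y1" "prune L R1 W1"
    and al: "alpha Y1 (perm_proc ps P)" "alpha W1 (perm_proc ps R)" and fo: "L \<inter> fo Y1 = {}"
    and safe: "safe_input L X1 (perm_act ps a)"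
    and bn: "abn (perm_act ps a) \<inter> fn X1 = {}" "abn (perm_act ps a) \<inter> fn R1 = {}"
  from follows_unprunedD[OF IH fin pr(1) al(1) fo safe bn(1)] obtain A' where
    stX: "step X1 (perm_act ps a) A'"
    and Q: "prune_alpha (L - bout_chans (perm_act ps a)) A' (perm_proc ps Q)" by blast
  have "step (Par X1 R1) (perm_act ps a) (Par A' R1)" using stX bn(2) by (rule step.s_par_l)
  moreover have "prune (L - bout_chans (perm_act ps a)) R1 W1"
    using pr(2) by (rule prune_cong) (use bn(2) in auto)
  hence "prune_alpha (L - bout_chans (perm_act ps a)) R1 (perm_proc ps R)"
    by (rule prune_alphaI[OF alpha.a_refl _ al(2)])
  ultimately show "\<exists>A'. step (Par X1 R1) (perm_act ps a) A' \<and>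
      prune_alpha (L - bout_chans (perm_act ps a)) A' (perm_proc ps (Par Q R))"
    using Q by (auto intro: prune_alpha_par)
qed

lemma follows_unpruned_par_r:
  assumes st: "step P a Q" and bn: "abn a \<inter> fn R = {}" and IH: "follows_unpruned P a Q"
  shows "follows_unpruned (Par R P) a (Par R Q)"
proof (rule follows_unpruned_ParI)
  show "step (Par R P) a (Par R Q)" using st bn by (rule step.s_par_r)
next
  fix L R1 W1 X1 Y1 ps assume fin: "finite L" and pr: "prune L R1 W1" "prune L X1 Y1"
    and al: "alpha W1 (perm_proc ps R)" "alpha Y1 (perm_proc ps P)" and fo: "L \<inter> fo Y1 = {}"
    and safe: "safe_input L X1 (perm_act ps a)"
    and bn: "abn (perm_act ps a) \<inter> fn R1 = {}" "abn (perm_act ps a) \<inter> fn X1 = {}"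
  from follows_unprunedD[OF IH fin pr(2) al(2) fo safe bn(2)] obtain A' where
    stX: "step X1 (perm_act ps a) A'"
    and Q: "prune_alpha (L - bout_chans (perm_act ps a)) A' (perm_proc ps Q)" by blast
  have "step (Par R1 X1) (perm_act ps a) (Par R1 A')" using stX bn(1) by (rule step.s_par_r)
  moreover have "prune (L - bout_chans (perm_act ps a)) R1 W1"
    using pr(1) by (rule prune_cong) (use bn(1) in auto)
  hence "prune_alpha (L - bout_chans (perm_act ps a)) R1 (perm_proc ps R)"
    by (rule prune_alphaI[OF alpha.a_refl _ al(1)])
  ultimately show "\<exists>A'. step (Par R1 X1) (perm_act ps a) A' \<and>
      prune_alpha (L - bout_chans (perm_act ps a)) A' (perm_proc ps (Par R Q))"
    using Q by (auto intro: prune_alpha_par)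
qed

lemma follows_unpruned_comm:
  assumes st: "step P (AOut k l) P'"
    and IH: "follows_unpruned P (AOut k l) P'" "follows_unpruned Q (AIn k l) Q'"
    and fin: "finite L" and pr: "prune L X1 Y1" "prune L R1 W1"
    and al: "alpha Y1 (perm_proc ps P)" "alpha W1 (perm_proc ps Q)"
    and fo: "L \<inter> fo Y1 = {}" "L \<inter> fo W1 = {}"
  obtains A1 A2 where "step X1 (AOut (perm_chan ps k) (perm_chan ps l)) A1"
    "step R1 (AIn (perm_chan ps k) (perm_chan ps l)) A2"
    "prune_alpha L A1 (perm_proc ps P')" "prune_alpha L A2 (perm_proc ps Q')"
proof -
  from follows_unprunedD[OF IH(1) fin pr(1) al(1) fo(1)] obtain A1 where
    "step X1 (AOut (perm_chan ps k) (perm_chan ps l)) A1" "prune_alpha L A1 (perm_proc ps P')"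
    by auto
  moreover have "perm_chan ps l \<in> fo Y1"
    using step_out_fo[OF step_perm[OF st, of ps, simplified]] alpha_fo[OF al(1)] by simp
  hence "safe_input L R1 (perm_act ps (AIn k l))" using fo(1) unfolding safe_input_def by auto
  from follows_unprunedD[OF IH(2) fin pr(2) al(2) fo(2) this] obtain A2 where
    "step R1 (AIn (perm_chan ps k) (perm_chan ps l)) A2" "prune_alpha L A2 (perm_proc ps Q')"
    by auto
  ultimately show ?thesis using that by blast
qed

lemma follows_unpruned_comm_l:
  assumes st: "step P (AOut k l) P'" "step Q (AIn k l) Q'"
    and IH: "follows_unpruned P (AOut k l) P'" "follows_unpruned Q (AIn k l) Q'"
  shows "follows_unpruned (Par P Q) ATau (Par P' Q')"
proof (rule follows_unpruned_ParI)
  show "step (Par P Q) ATau (Par P' Q')" using st by (rule step.s_comm_l)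
next
  fix L X1 Y1 R1 W1 ps assume "finite L" "prune L X1 Y1" "prune L R1 W1"
    "alpha Y1 (perm_proc ps P)" "alpha W1 (perm_proc ps Q)" "L \<inter> fo Y1 = {}" "L \<inter> fo W1 = {}"
  from follows_unpruned_comm[OF st(1) IH this] obtain A1 A2 where
    "step X1 (AOut (perm_chan ps k) (perm_chan ps l)) A1"
    "step R1 (AIn (perm_chan ps k) (perm_chan ps l)) A2"
    "prune_alpha L A1 (perm_proc ps P')" "prune_alpha L A2 (perm_proc ps Q')" .
  thus "\<exists>A'. step (Par X1 R1) (perm_act ps ATau) A' \<and>
      prune_alpha (L - bout_chans (perm_act ps ATau)) A' (perm_proc ps (Par P' Q'))"
    by (auto intro: step.s_comm_l prune_alpha_par)
qed

lemma follows_unpruned_comm_r: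
  assumes st: "step P (AOut k l) P'" "step Q (AIn k l) Q'"
    and IH: "follows_unpruned P (AOut k l) P'" "follows_unpruned Q (AIn k l) Q'"
  shows "follows_unpruned (Par Q P) ATau (Par Q' P')"
proof (rule follows_unpruned_ParI)
  show "step (Par Q P) ATau (Par Q' P')" using st by (rule step.s_comm_r)
next
  fix L R1 W1 X1 Y1 ps assume fin: "finite L" and pr: "prune L R1 W1" "prune L X1 Y1"
    and al: "alpha W1 (perm_proc ps Q)" "alpha Y1 (perm_proc ps P)"
    and fo: "L \<inter> fo W1 = {}" "L \<inter> fo Y1 = {}"
  from follows_unpruned_comm[OF st(1) IH fin pr(2,1) al(2,1) fo(2,1)] obtain A1 A2 where
    "step X1 (AOut (perm_chan ps k) (perm_chan ps l)) A1"
    "step R1 (AIn (perm_chan ps k) (perm_chan ps l)) A2"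
    "prune_alpha L A1 (perm_proc ps P')" "prune_alpha L A2 (perm_proc ps Q')" .
  thus "\<exists>A'. step (Par R1 X1) (perm_act ps ATau) A' \<and>
      prune_alpha (L - bout_chans (perm_act ps ATau)) A' (perm_proc ps (Par Q' P'))"
    by (auto intro: step.s_comm_r prune_alpha_par)
qed

text \<open>The extruded channel is renamed on the pruned side to a channel \<open>e\<close> that is fresh for the
  unpruned side as well.\<close>

lemma follows_unpruned_close:
  assumes st: "step P (ABOut k l) P'" and fr: "Ch l \<notin> fn Q"
    and IH: "follows_unpruned P (ABOut k l) P'" "follows_unpruned Q (AIn k l) Q'"
    and fin: "finite L" and pr: "prune L X1 Y1" "prune L R1 W1"
    and al: "alpha Y1 (perm_proc ps P)" "alpha W1 (perm_proc ps Q)"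
    and fo: "L \<inter> fo Y1 = {}" "L \<inter> fo W1 = {}"
    and e: "e \<notin> L \<union> fchans X1 \<union> fchans R1 \<union> fchans (perm_proc ps P) \<union> fchans (perm_proc ps Q) \<union>
      {perm_chan ps k, perm_chan ps l}"
  obtains A1 A2 where "step X1 (ABOut (perm_chan ps k) e) A1" "step R1 (AIn (perm_chan ps k) e) A2"
    "prune_alpha (L - {e}) A1 (perm_proc ((perm_chan ps l, e) # ps) P')"
    "prune_alpha (L - {e}) A2 (perm_proc ((perm_chan ps l, e) # ps) Q')"
proof -
  define ps' where "ps' = (perm_chan ps l, e) # ps"
  have "k \<noteq> l" and lP: "Ch l \<notin> fn P" using step_bout_fresh[OF st] by auto
  hence act: "perm_act ps' (ABOut k l) = ABOut (perm_chan ps k) e"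
    "perm_act ps' (AIn k l) = AIn (perm_chan ps k) e"
    using e unfolding ps'_def by auto
  have "alpha (perm_proc ps P) (perm_proc ps' P)" "alpha (perm_proc ps Q) (perm_proc ps' Q)"
    unfolding ps'_def using e lP fr by (auto intro!: alpha_fresh_swapc simp: Ch_fn_perm)
  hence alY: "alpha Y1 (perm_proc ps' P)" and alW: "alpha W1 (perm_proc ps' Q)"
    using al alpha.a_trans by blast+
  have "safe_input L X1 (perm_act ps' (ABOut k l))" "abn (perm_act ps' (ABOut k l)) \<inter> fn X1 = {}"
    using act e by auto
  from follows_unprunedD[OF IH(1) fin pr(1) alY fo(1) this] obtain A1 where
    "step X1 (ABOut (perm_chan ps k) e) A1" "prune_alpha (L - {e}) A1 (perm_proc ps' P')"
    using act by auto
  moreover have "safe_input L R1 (perm_act ps' (AIn k l))" "abn (perm_act ps' (AIn k l)) \<inter> fn R1 = {}"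
    using act e unfolding safe_input_def by auto
  from follows_unprunedD[OF IH(2) fin pr(2) alW fo(2) this] obtain A2 where
    "step R1 (AIn (perm_chan ps k) e) A2" "prune_alpha (L - {e}) A2 (perm_proc ps' Q')"
    using act e by auto
  ultimately show ?thesis using that unfolding ps'_def by blast
qed

lemma fresh_close_chan:
  assumes "finite L"
  obtains e where "e \<notin> L \<union> fchans A \<union> fchans X \<union> fchans Y \<union> fchans X' \<union> fchans Y' \<union> {k, l}"
  by (erule fresh_chanE) (simp add: assms finite_fchans)

lemma alpha_Res_fresh_unrename:
  assumes "Ch e \<notin> fn Z"
  shows "alpha (Res e (swapc c e Z)) (Res c Z)"
  using alpha_Res_fresh_rename[OF assms] by (rule alpha.a_sym)

lemma follows_unpruned_close_l:
  assumes st: "step P (ABOut k l) P'" "step Q (AIn k l) Q'" "Ch l \<notin> fn Q"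
    and IH: "follows_unpruned P (ABOut k l) P'" "follows_unpruned Q (AIn k l) Q'"
  shows "follows_unpruned (Par P Q) ATau (Res l (Par P' Q'))"
proof (rule follows_unpruned_ParI)
  show "step (Par P Q) ATau (Res l (Par P' Q'))" using st by (rule step.s_close_l)
next
  fix L X1 Y1 R1 W1 ps assume fin: "finite L" and pr: "prune L X1 Y1" "prune L R1 W1"
    and al: "alpha Y1 (perm_proc ps P)" "alpha W1 (perm_proc ps Q)"
    and fo: "L \<inter> fo Y1 = {}" "L \<inter> fo W1 = {}"
  obtain e where e: "e \<notin> L \<union> fchans (Par X1 R1) \<union> fchans (perm_proc ps P) \<union> fchans (perm_proc ps Q) \<union>
      fchans (perm_proc ps P') \<union> fchans (perm_proc ps Q') \<union> {perm_chan ps k, perm_chan ps l}"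
    using fin by (rule fresh_close_chan)
  from follows_unpruned_close[OF st(1,3) IH fin pr al fo, of e] e obtain A1 A2 where
    A: "step X1 (ABOut (perm_chan ps k) e) A1" "step R1 (AIn (perm_chan ps k) e) A2"
    and pa: "prune_alpha (L - {e}) A1 (swapc (perm_chan ps l) e (perm_proc ps P'))"
      "prune_alpha (L - {e}) A2 (swapc (perm_chan ps l) e (perm_proc ps Q'))"
    by auto
  have "step (Par X1 R1) ATau (Res e (Par A1 A2))" using A e by (intro step.s_close_l) auto
  moreover have "prune_alpha L (Res e (Par A1 A2)) (perm_proc ps (Res l (Par P' Q')))"
    using prune_alpha_close[OF pa] alpha_Res_fresh_unrename[of e "Par (perm_proc ps P') (perm_proc ps Q')"]
      e by (auto intro: prune_alpha_alpha)
  ultimately show "\<exists>A'. step (Par X1 R1) (perm_act ps ATau) A' \<and>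
      prune_alpha (L - bout_chans (perm_act ps ATau)) A' (perm_proc ps (Res l (Par P' Q')))"
    by auto
qed

lemma follows_unpruned_close_r:
  assumes st: "step P (ABOut k l) P'" "step Q (AIn k l) Q'" "Ch l \<notin> fn Q"
    and IH: "follows_unpruned P (ABOut k l) P'" "follows_unpruned Q (AIn k l) Q'"
  shows "follows_unpruned (Par Q P) ATau (Res l (Par Q' P'))"
proof (rule follows_unpruned_ParI)
  show "step (Par Q P) ATau (Res l (Par Q' P'))" using st by (rule step.s_close_r)
next
  fix L R1 W1 X1 Y1 ps assume fin: "finite L" and pr: "prune L R1 W1" "prune L X1 Y1"
    and al: "alpha W1 (perm_proc ps Q)" "alpha Y1 (perm_proc ps P)"
    and fo: "L \<inter> fo W1 = {}" "L \<inter> fo Y1 = {}"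
  obtain e where e: "e \<notin> L \<union> fchans (Par X1 R1) \<union> fchans (perm_proc ps P) \<union> fchans (perm_proc ps Q) \<union>
      fchans (perm_proc ps P') \<union> fchans (perm_proc ps Q') \<union> {perm_chan ps k, perm_chan ps l}"
    using fin by (rule fresh_close_chan)
  from follows_unpruned_close[OF st(1,3) IH fin pr(2,1) al(2,1) fo(2,1), of e] e obtain A1 A2 where
    A: "step X1 (ABOut (perm_chan ps k) e) A1" "step R1 (AIn (perm_chan ps k) e) A2"
    and pa: "prune_alpha (L - {e}) A1 (swapc (perm_chan ps l) e (perm_proc ps P'))"
      "prune_alpha (L - {e}) A2 (swapc (perm_chan ps l) e (perm_proc ps Q'))"
    by auto
  have "step (Par R1 X1) ATau (Res e (Par A2 A1))" using A e by (intro step.s_close_r) auto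
  moreover have "prune_alpha L (Res e (Par A2 A1)) (perm_proc ps (Res l (Par Q' P')))"
    using prune_alpha_close[OF pa(2,1)] alpha_Res_fresh_unrename[of e "Par (perm_proc ps Q') (perm_proc ps P')"]
      e by (auto intro: prune_alpha_alpha)
  ultimately show "\<exists>A'. step (Par R1 X1) (perm_act ps ATau) A' \<and>
      prune_alpha (L - bout_chans (perm_act ps ATau)) A' (perm_proc ps (Res l (Par Q' P')))"
    by auto
qed

lemma follows_unpruned_res_prune:
  assumes st: "step P a P'" and c: "Ch c \<notin> an a" and IH: "follows_unpruned P a P'"
    and fin: "finite L" and al: "alpha (Res c1 Y1) (Res (perm_chan ps c) (perm_proc ps P))"
    and pr: "prune L0 X1 Y1" "L0 - {c1} \<subseteq> L" "c1 \<in> L0 \<longrightarrow> c1 \<notin> fo Y1"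
    and fo: "L \<inter> fo (Res c1 Y1) = {}" and safe: "safe_input L (Res c1 X1) (perm_act ps a)"
    and bn: "abn (perm_act ps a) \<inter> fn (Res c1 X1) = {}"
  shows "\<exists>A'. step (Res c1 X1) (perm_act ps a) A' \<and>
    prune_alpha (L - bout_chans (perm_act ps a)) A' (perm_proc ps (Res c P'))"
proof -
  define pc where "pc = perm_chan ps c"
  obtain d where d: "d \<notin> L \<union> fchans X1 \<union> {e. Ch e \<in> an (perm_act ps a)} \<union> aobj (perm_act ps a) \<union>
      fchans (perm_proc ps P) \<union> {c1, pc}"
    by (erule fresh_chanE) (simp add: fin finite_fchans finite_an_chans finite_aobj)
  define ps' where "ps' = (pc, d) # ps"
  define L' where "L' = swp c1 d ` L0"
  have dY: "Ch d \<notin> fn Y1" using prune_fn[OF pr(1)] d by auto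
  have "Ch d \<notin> fn (perm_proc ps P)" using d by auto
  from alpha_Res_swapc_fresh[OF al dY this]
  have alY: "alpha (swapc c1 d Y1) (perm_proc ps' P)" unfolding ps'_def pc_def by simp
  have act: "perm_act ps' a = perm_act ps a"
    unfolding ps'_def pc_def using c d by (simp add: Ch_an_perm swapa_fresh)
  have dL0: "d \<notin> L0" using pr(2) d by auto
  have "L0 \<inter> fo Y1 = {}" using fo pr(2,3) by auto
  hence foY: "L' \<inter> fo (swapc c1 d Y1) = {}" unfolding L'_def by (auto simp: mem_fo_swapc)
  have "finite L0" using finite_subset[of L0 "insert c1 L"] fin pr(2) by auto
  hence finL': "finite L'" unfolding L'_def by simp
  have "safe_input L' (swapc c1 d X1) (perm_act ps' a)"
    unfolding safe_input_def act
  proof (intro allI impI)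
    fix k n assume an: "perm_act ps a = AIn k n" and nX: "Ch n \<in> fn (swapc c1 d X1)"
    have "n \<noteq> d" "n \<noteq> c1" using an nX d by (auto simp: Ch_fn_swapc)
    hence "Ch n \<in> fn (Res c1 X1)" using nX by (simp add: Ch_fn_swapc)
    hence "n \<notin> L" using safe an unfolding safe_input_def by auto
    thus "n \<notin> L'" using \<open>n \<noteq> d\<close> \<open>n \<noteq> c1\<close> pr(2) unfolding L'_def by auto
  qed
  moreover have "abn (perm_act ps' a) \<inter> fn (swapc c1 d X1) = {}"
    unfolding act using bn d by (cases "perm_act ps a") (auto simp: Ch_fn_swapc swp_def)
  ultimately obtain A'' where stX: "step (swapc c1 d X1) (perm_act ps' a) A''"
    and P': "prune_alpha (L' - bout_chans (perm_act ps' a)) A'' (perm_proc ps' P')"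
    using follows_unprunedD[OF IH finL' prune_swapc[OF pr(1), of c1 d, folded L'_def] alY foY] by blast
  have alA: "alpha (Res c1 X1) (Res d (swapc c1 d X1))" using d by (intro alpha_Res_fresh_rename) auto
  have "Ch d \<notin> an (perm_act ps a)" using d by auto
  from step.s_alpha[OF alA step.s_res[OF stX[unfolded act] this]]
  have stA: "step (Res c1 X1) (perm_act ps a) (Res d A'')" .
  have pa: "prune_alpha (L - bout_chans (perm_act ps a)) (Res d A'') (Res d (perm_proc ps' P'))"
  proof (rule prune_alpha_res[OF P'[unfolded act]])
    show "L' - bout_chans (perm_act ps a) - {d} \<subseteq> L - bout_chans (perm_act ps a)"
      using pr(2) dL0 unfolding L'_def by (auto simp: swp_def split: if_splits)
    have "d \<notin> fo (perm_proc ps' P')" if "c1 \<in> L0"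
    proof -
      have "d \<notin> fo (swapc c1 d Y1)" using pr(3) that by (simp add: mem_fo_swapc)
      hence "d \<notin> fo (perm_proc ps' P)" using alpha_fo[OF alY] by simp
      thus ?thesis using step_fo[OF step_perm[OF st, of ps']] d unfolding act by auto
    qed
    thus "d \<in> L' - bout_chans (perm_act ps a) \<longrightarrow> d \<notin> fo (perm_proc ps' P')"
      unfolding L'_def by auto
  qed
  have "Ch d \<notin> fn (perm_proc ps P')" using step_fn[OF step_perm[OF st, of ps]] d by auto
  hence "alpha (Res d (perm_proc ps' P')) (perm_proc ps (Res c P'))"
    unfolding ps'_def pc_def by (simp add: alpha_Res_fresh_unrename)
  with stA prune_alpha_alpha[OF pa] show ?thesis by blast
qed

lemma follows_unpruned_res:
  assumes st: "step P a P'" and c: "Ch c \<notin> an a" and IH: "follows_unpruned P a P'"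
  shows "follows_unpruned (Res c P) a (Res c P')"
  unfolding follows_unpruned_def
proof (intro allI impI)
  fix L A1 B1 ps assume fin: "finite L" and pr: "prune L A1 B1"
    and al: "alpha B1 (perm_proc ps (Res c P))" and fo: "L \<inter> fo B1 = {}"
    and safe: "safe_input L A1 (perm_act ps a)" and bn: "abn (perm_act ps a) \<inter> fn A1 = {}"
  have stB: "step (Res c P) a (Res c P')" using st c by (rule step.s_res)
  from al obtain c1 Y1 where B1: "B1 = Res c1 Y1" by (auto elim: alpha_ResE2)
  from pr[unfolded B1] show "\<exists>A'. step A1 (perm_act ps a) A' \<and>
      prune_alpha (L - bout_chans (perm_act ps a)) A' (perm_proc ps (Res c P'))"
  proof (cases rule: prune_ResE2)
    case refl thus ?thesis using follows_unpruned_refl[OF al stB] B1 by simp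
  next
    case (res L0 X1)
    thus ?thesis using follows_unpruned_res_prune[OF st c IH fin] al fo safe bn B1 by simp
  next
    case (handshake m y l p x Q)
    with al B1 have "alpha (handshake (plain_input m y) c1 l x Q) (perm_proc ps (Res c P))" by simp
    from handshake_right_sim[OF this step_perm[OF stB], where p = p and L = L] handshake(1)
    show ?thesis by auto
  qed
qed

lemma follows_unpruned_open:
  assumes st: "step P (AOut k c) Q" and kc: "k \<noteq> c" and IH: "follows_unpruned P (AOut k c) Q"
  shows "follows_unpruned (Res c P) (ABOut k c) Q"
  unfolding follows_unpruned_def
proof (intro allI impI)
  fix L A1 B1 ps assume fin: "finite L" and pr: "prune L A1 B1"
    and al: "alpha B1 (perm_proc ps (Res c P))" and fo: "L \<inter> fo B1 = {}"
    and bn: "abn (perm_act ps (ABOut k c)) \<inter> fn A1 = {}"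
  define pc pk where "pc = perm_chan ps c" and "pk = perm_chan ps k"
  have stB: "step (Res c P) (ABOut k c) Q" using st kc by (rule step.s_open)
  from al obtain c1 Y1 where B1: "B1 = Res c1 Y1" by (auto elim: alpha_ResE2)
  from pr[unfolded B1] show "\<exists>A'. step A1 (perm_act ps (ABOut k c)) A' \<and>
      prune_alpha (L - bout_chans (perm_act ps (ABOut k c))) A' (perm_proc ps Q)"
  proof (cases rule: prune_ResE2)
    case refl thus ?thesis using follows_unpruned_refl[OF al stB] B1 by simp
  next
    case (res L0 X1)
    from al B1 have al1: "alpha (swapc c1 pc Y1) (perm_proc ps P)"
      unfolding pc_def by (simp add: alpha_Res_iff)
    have frA: "pc = c1 \<or> Ch pc \<notin> fn X1" using bn res(1) unfolding pc_def by auto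
    have "pc \<in> fo (perm_proc ps P)"
      using step_out_fo[OF step_perm[OF st, of ps, simplified]] unfolding pc_def .
    have "c1 \<notin> L0"
    proof
      assume "c1 \<in> L0"
      hence "pc \<notin> fo (swapc c1 pc Y1)" using res(4) by (simp add: mem_fo_swapc)
      thus False using \<open>pc \<in> fo (perm_proc ps P)\<close> alpha_fo[OF al1] by simp
    qed
    define L' where "L' = swp c1 pc ` L0"
    have "L0 \<inter> fo Y1 = {}" using fo B1 res(3) \<open>c1 \<notin> L0\<close> by auto
    hence foY: "L' \<inter> fo (swapc c1 pc Y1) = {}" unfolding L'_def by (auto simp: mem_fo_swapc)
    have "finite L0" using finite_subset[of L0 "insert c1 L"] fin res(3) by auto
    hence "finite L'" unfolding L'_def by simp
    from follows_unprunedD[OF IH this prune_swapc[OF res(2), of c1 pc, folded L'_def] al1 foY]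
    obtain A'' where stX: "step (swapc c1 pc X1) (AOut pk pc) A''" and Q: "prune_alpha L' A'' (perm_proc ps Q)"
      unfolding L'_def pk_def pc_def by auto
    have alA: "alpha A1 (Res pc (swapc c1 pc X1))"
      using frA res(1) by (cases "pc = c1") (auto intro: alpha.a_refl alpha.a_res_rename)
    have "pk \<noteq> pc" using kc unfolding pk_def pc_def by simp
    from step.s_alpha[OF alA step.s_open[OF stX this]]
    have "step A1 (ABOut pk pc) A''" .
    moreover have "prune_alpha (L - {pc}) A'' (perm_proc ps Q)"
    proof (rule prune_alpha_cong[OF Q], intro ballI impI)
      fix l assume l: "l \<in> L'" "Ch l \<in> fn A''"
      hence "Ch l \<in> fn (swapc c1 pc X1) \<or> l = pc" using step_fn[OF stX] by auto
      thus "l \<in> L - {pc}"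
        using l(1) frA res(3) \<open>c1 \<notin> L0\<close> unfolding L'_def by (auto simp: Ch_fn_swapc swp_def split: if_splits)
    qed
    ultimately show ?thesis unfolding pk_def pc_def by auto
  next
    case (handshake m y l p x Q')
    with al B1 have "alpha (handshake (plain_input m y) c1 l x Q') (perm_proc ps (Res c P))" by simp
    from handshake_right_sim[OF this step_perm[OF stB]] show ?thesis by simp
  qed
qed

theorem step_follows_unpruned: "step B a B' \<Longrightarrow> follows_unpruned B a B'"
proof (induction rule: step.induct)
  case (s_out k l P) show ?case by (rule follows_unpruned_out)
next
  case (s_in l P k x) thus ?case by (rule follows_unpruned_in)
next
  case (s_match p P a P' c) show ?case by (rule follows_unpruned_match[OF s_match(1)])
next
  case (s_res P a P' k) thus ?case by (rule follows_unpruned_res)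
next
  case (s_open P k l Q) thus ?case by (rule follows_unpruned_open)
next
  case (s_par_l P a Q R) thus ?case by (rule follows_unpruned_par_l)
next
  case (s_par_r P a Q R) thus ?case by (rule follows_unpruned_par_r)
next
  case (s_comm_l P k l P' Q Q') thus ?case by (rule follows_unpruned_comm_l)
next
  case (s_comm_r P k l P' Q Q') thus ?case by (rule follows_unpruned_comm_r)
next
  case (s_close_l P k l P' Q Q') thus ?case by (rule follows_unpruned_close_l)
next
  case (s_close_r P k l P' Q Q') thus ?case by (rule follows_unpruned_close_r)
next
  case (s_rep_act P a P') show ?case
    by (rule follows_unpruned_Bang[OF step.s_rep_act[OF s_rep_act(1)]])
next
  case (s_rep_comm P k l P' P'') show ?case
    by (rule follows_unpruned_Bang[OF step.s_rep_comm[OF s_rep_comm(1,2)]])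
next
  case (s_rep_close P k l P' P'') show ?case
    by (rule follows_unpruned_Bang[OF step.s_rep_close[OF s_rep_close(1,2,3)]])
next
  case (s_alpha P P' a Q) show ?case by (rule follows_unpruned_alpha[OF s_alpha(3,1)])
qed

lemma is_bisim_prune_alpha:
  "is_bisim ({(A, B). prune_alpha {} A B} \<union> {(B, A). prune_alpha {} A B})" (is "is_bisim ?R")
  unfolding is_bisim_def
proof (intro conjI allI impI)
  show "sym ?R" unfolding sym_def by blast
next
  fix P Q a P' assume PQ: "(P, Q) \<in> ?R" and st: "step P a P' \<and> abn a \<inter> fn Q = {}"
  from PQ consider (pruned) A1 B1 where "alpha P A1" "prune {} A1 B1" "alpha B1 Q"
    | (unpruned) A1 B1 where "alpha Q A1" "prune {} A1 B1" "alpha B1 P"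
    unfolding prune_alpha_def by blast
  thus "\<exists>Q'. step Q a Q' \<and> (P', Q') \<in> ?R"
  proof cases
    case pruned
    from follows_prunedD[OF step_follows_pruned[OF conjunct1[OF st]] _ alpha.a_sym[OF pruned(1)]
        pruned(2)] obtain B' where "step B1 a B'" "prune_alpha {} P' B'"
      unfolding safe_input_def by auto
    thus ?thesis using step.s_alpha[OF alpha.a_sym[OF pruned(3)]] by blast
  next
    case unpruned
    have "abn a \<inter> fn A1 = {}" using st alpha_fn[OF unpruned(1)] by simp
    with follows_unprunedD[OF step_follows_unpruned[OF conjunct1[OF st]] _ unpruned(2), of "[]"]
    obtain A' where "step A1 a A'" "prune_alpha {} A' P'"
      using unpruned(3) unfolding safe_input_def by auto
    thus ?thesis using step.s_alpha[OF unpruned(1)] by blast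
  qed
qed

theorem proposition1:
  fixes P :: proc and m k l :: chan and p :: prefix and x y :: var
  shows "Res k (Par (Res l (Pre (POut (Ch k) l) (Pre (PIn (Ch m) y) (Pre (PMatch (Var y) (Ch l) p) PNil))))
                    (Pre (PIn (Ch k) x) P))
         \<sim>\<^sub>s
         Res k (Par (Res l (Pre (POut (Ch k) l) (Pre (PIn (Ch m) y) PNil)))
                    (Pre (PIn (Ch k) x) P))"
proof -
  have "prune_alpha {} (handshake (guarded_input m y l p) k l x P) (handshake (plain_input m y) k l x P)"
    by (rule prune_alphaI[OF alpha.a_refl prune.prune_handshake alpha.a_refl])
  thus ?thesis unfolding bisimilar_def using is_bisim_prune_alpha by blast
qed

end
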